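(* Let $G$ be a finite group and $H\trianglelefteq G$ an atomically universally definable normal subgroup. Then $\mathrm{EQN\text{-}ID}(G/H)\le_{\mathrm m}^{\mathsf{AC}^0}\mathrm{EQN\text{-}ID}(G)$.
   Context: An expression over a group $G$ is a word over $G\cup\mathcal{X}\cup\mathcal{X}^{-1}$ ($\mathcal{X}$ variables, $\mathcal{X}^{-1}$ formal inverses), evaluated under assignments $\sigma:\mathcal{X}\to G$ with $\sigma(X^{-1})=\sigma(X)^{-1}$, $\sigma(g)=g$. $\mathrm{EQN\text{-}ID}(G)$: given an expression $\alpha$, decide whether $\sigma(\alpha)=1$ for all assignments $\sigma$. A subset $S\subseteq G$ is atomically universally definable if there is an expression $\alpha$ over variables $\{X,Y_1,Y_2,\dots\}$ such that $S=\{g\in G:(\sigma\cup[X\mapsto g])(\alpha)=1\text{ for all }\sigma:\{Y_1,Y_2,\dots\}\to G\}$. $\le_{\mathrm m}^{\mathsf{AC}^0}$ denotes many-one reducibility via functions computable by polynomial-size constant-depth Boolean circuits. *)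

theory Defs
  imports "HOL-Algebra.Algebra"
begin

datatype 'g letter = Cst 'g | Var nat | IVar nat

type_synonym 'g expr = "'g letter list"

definition expr_over :: "('g, 'b) monoid_scheme \<Rightarrow> 'g expr \<Rightarrow> bool" where
  "expr_over G \<alpha> \<longleftrightarrow> (\<forall>g. Cst g \<in> set \<alpha> \<longrightarrow> g \<in> carrier G)"

definition assignment :: "('g, 'b) monoid_scheme \<Rightarrow> (nat \<Rightarrow> 'g) \<Rightarrow> bool" where
  "assignment G \<sigma> \<longleftrightarrow> (\<forall>i. \<sigma> i \<in> carrier G)"

fun eval_letter :: "('g, 'b) monoid_scheme \<Rightarrow> (nat \<Rightarrow> 'g) \<Rightarrow> 'g letter \<Rightarrow> 'g" where
  "eval_letter G \<sigma> (Cst g) = g"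
| "eval_letter G \<sigma> (Var i) = \<sigma> i"
| "eval_letter G \<sigma> (IVar i) = inv\<^bsub>G\<^esub> (\<sigma> i)"

fun eval_expr :: "('g, 'b) monoid_scheme \<Rightarrow> (nat \<Rightarrow> 'g) \<Rightarrow> 'g expr \<Rightarrow> 'g" where
  "eval_expr G \<sigma> [] = \<one>\<^bsub>G\<^esub>"
| "eval_expr G \<sigma> (a # w) = eval_letter G \<sigma> a \<otimes>\<^bsub>G\<^esub> eval_expr G \<sigma> w"

definition EQN_ID :: "('g, 'b) monoid_scheme \<Rightarrow> 'g expr set" where
  "EQN_ID G = {\<alpha>. expr_over G \<alpha> \<and> (\<forall>\<sigma>. assignment G \<sigma> \<longrightarrow> eval_expr G \<sigma> \<alpha> = \<one>\<^bsub>G\<^esub>)}"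

text \<open>Atomic universal definability: X is variable 0, Y_1, Y_2, ... are variables 1, 2, ...\<close>
definition atomically_universally_definable :: "('g, 'b) monoid_scheme \<Rightarrow> 'g set \<Rightarrow> bool" where
  "atomically_universally_definable G S \<longleftrightarrow>
     (\<exists>\<alpha>. expr_over G \<alpha> \<and>
        S = {g \<in> carrier G. \<forall>\<sigma>. assignment G \<sigma> \<longrightarrow> \<sigma> 0 = g \<longrightarrow> eval_expr G \<sigma> \<alpha> = \<one>\<^bsub>G\<^esub>})"

definition elem_code :: "('g, 'b) monoid_scheme \<Rightarrow> 'g \<Rightarrow> nat" where
  "elem_code G = (SOME f. bij_betw f (carrier G) {..<card (carrier G)})"

text \<open>Canonical binary (least significant bit first), made self-delimiting by doubling bits
  and appending the terminator 01.\<close>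
fun nat_bits :: "nat \<Rightarrow> bool list" where
  "nat_bits n = (if n = 0 then [] else odd n # nat_bits (n div 2))"

definition sd_code :: "nat \<Rightarrow> bool list" where
  "sd_code n = concat (map (\<lambda>b. [b, b]) (nat_bits n)) @ [False, True]"

fun letter_num :: "('g, 'b) monoid_scheme \<Rightarrow> 'g letter \<Rightarrow> nat" where
  "letter_num G (Cst g) = 3 * elem_code G g"
| "letter_num G (Var i) = 3 * i + 1"
| "letter_num G (IVar i) = 3 * i + 2"

definition encode_expr :: "('g, 'b) monoid_scheme \<Rightarrow> 'g expr \<Rightarrow> bool list" where
  "encode_expr G \<alpha> = concat (map (\<lambda>a. sd_code (letter_num G a)) \<alpha>)"

definition EQN_ID_lang :: "('g, 'b) monoid_scheme \<Rightarrow> bool list set" where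
  "EQN_ID_lang G = encode_expr G ` EQN_ID G"

text \<open>Unbounded fan-in Boolean circuits (given as formulas; for constant depth, unfolding a
  polynomial-size circuit into a formula keeps the size polynomial).\<close>
datatype circ = Inp nat | Neg circ | Conj "circ list" | Disj "circ list"

fun ceval :: "bool list \<Rightarrow> circ \<Rightarrow> bool" where
  "ceval x (Inp i) = (i < length x \<and> x ! i)"
| "ceval x (Neg c) = (\<not> ceval x c)"
| "ceval x (Conj cs) = (\<forall>c\<in>set cs. ceval x c)"
| "ceval x (Disj cs) = (\<exists>c\<in>set cs. ceval x c)"

fun cdepth :: "circ \<Rightarrow> nat" where
  "cdepth (Inp i) = 0"
| "cdepth (Neg c) = Suc (cdepth c)"
| "cdepth (Conj cs) = Suc (fold max (map cdepth cs) 0)"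
| "cdepth (Disj cs) = Suc (fold max (map cdepth cs) 0)"

fun csize :: "circ \<Rightarrow> nat" where
  "csize (Inp i) = 1"
| "csize (Neg c) = Suc (csize c)"
| "csize (Conj cs) = Suc (sum_list (map csize cs))"
| "csize (Disj cs) = Suc (sum_list (map csize cs))"

definition AC0_computable :: "(bool list \<Rightarrow> bool list) \<Rightarrow> bool" where
  "AC0_computable f \<longleftrightarrow>
     (\<exists>d k. \<exists>C :: nat \<Rightarrow> circ list.
        (\<forall>n. \<forall>c\<in>set (C n). cdepth c \<le> d) \<and>
        (\<forall>n. sum_list (map csize (C n)) \<le> k * (n + 1) ^ k) \<and>
        (\<forall>x. f x = map (ceval x) (C (length x))))"

definition AC0_many_one_reducible :: "bool list set \<Rightarrow> bool list set \<Rightarrow> bool" where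
  "AC0_many_one_reducible A B \<longleftrightarrow>
     (\<exists>f. AC0_computable f \<and> (\<forall>x. x \<in> A \<longleftrightarrow> f x \<in> B))"

end

theory Submission
  imports Defs
begin

text \<open>
  Let the expression \<open>\<beta>(X, Y\<^sub>1, Y\<^sub>2, \<dots>)\<close> define \<open>H\<close>. Replacing every constant of an
  expression \<open>\<alpha>\<close> over \<open>G/H\<close> by a coset representative gives an expression \<open>\<alpha>'\<close> over \<open>G\<close> such
  that the quotient map sends \<open>\<alpha>'(\<sigma>)\<close> to the value of \<open>\<alpha>\<close> at the cosets of \<open>\<sigma>\<close>; as every
  assignment to \<open>G/H\<close> arises in this way, \<open>\<alpha>\<close> is an identity of \<open>G/H\<close> iff \<open>\<alpha>'(\<sigma>) \<in> H\<close> for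
  all \<open>\<sigma>\<close>, iff \<open>\<beta>(\<alpha>', Y)\<close> is an identity of \<open>G\<close>, once the \<open>Y\<^sub>i\<close> are renamed apart from
  the variables of \<open>\<alpha>'\<close> and \<open>X\<^sup>-\<^sup>1\<close> is written as \<open>\<alpha>'\<^sup>|\<^sup>G\<^sup>|\<^sup>-\<^sup>1\<close>.

  Since \<open>\<beta>\<close> is fixed, the output is computable in AC0 as soon as the code of \<open>\<alpha>'\<close> is, and
  the latter is a letterwise translation of the input with a fixed expansion factor: each
  letter is lifted and padded with factors \<open>X\<^sub>i X\<^sub>i\<^sup>-\<^sup>1\<close> to exactly \<open>K\<close> times the length of
  its code. An output bit is thus obtained by locating the input letter it comes from, which
  a constant-depth circuit can guess and verify, and then either looking up its image (short
  codes) or copying its bits (long codes, which lifting leaves unchanged).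
\<close>

section \<open>Self-delimiting codes as strings of bit pairs\<close>

declare nat_bits.simps [simp del]

lemma nat_bits_0 [simp]: "nat_bits 0 = []"
  by (simp add: nat_bits.simps)

lemma nat_bits_pos: "n > 0 \<Longrightarrow> nat_bits n = odd n # nat_bits (n div 2)"
  by (simp add: nat_bits.simps)

lemma length_nat_bits_le_of_less: "m < 2 ^ k \<Longrightarrow> length (nat_bits m) \<le> k"
proof (induction m arbitrary: k rule: nat_bits.induct)
  case (1 m)
  show ?case
  proof (cases "m = 0")
    case False
    then obtain k' where "k = Suc k'" using "1.prems" by (cases k) auto
    then show ?thesis using "1.IH"[OF False, of k'] "1.prems" False by (simp add: nat_bits_pos)
  qed simp
qed

lemma length_nat_bits_le: "length (nat_bits n) \<le> n"
  by (simp add: length_nat_bits_le_of_less)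

lemma less_power_length_nat_bits: "n < 2 ^ length (nat_bits n)"
proof (induction n rule: nat_bits.induct)
  case (1 n)
  then show ?case by (cases "n = 0") (auto simp: nat_bits_pos)
qed

abbreviation sd_codes :: "nat list \<Rightarrow> bool list" where
  "sd_codes ns \<equiv> concat (map sd_code ns)"

abbreviation stop_pair :: "bool \<times> bool" where
  "stop_pair \<equiv> (False, True)"

definition code_pairs :: "nat \<Rightarrow> (bool \<times> bool) list" where
  "code_pairs m = map (\<lambda>b. (b, b)) (nat_bits m) @ [stop_pair]"

abbreviation codes_pairs :: "nat list \<Rightarrow> (bool \<times> bool) list" where
  "codes_pairs ns \<equiv> concat (map code_pairs ns)"

definition unpair :: "(bool \<times> bool) list \<Rightarrow> bool list" where
  "unpair s = concat (map (\<lambda>(a, b). [a, b]) s)"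

definition pair_up :: "bool list \<Rightarrow> (bool \<times> bool) list" where
  "pair_up x = map (\<lambda>j. (x ! (2 * j), x ! Suc (2 * j))) [0..<length x div 2]"

lemma code_pairs_ne [simp]: "code_pairs m \<noteq> []"
  by (simp add: code_pairs_def)

lemma last_code_pairs [simp]: "last (code_pairs m) = stop_pair"
  by (simp add: code_pairs_def)

lemma code_pairs_0 [simp]: "code_pairs 0 = [stop_pair]"
  by (simp add: code_pairs_def)

lemma code_pairs_pos: "m > 0 \<Longrightarrow> code_pairs m = (odd m, odd m) # code_pairs (m div 2)"
  by (simp add: code_pairs_def nat_bits_pos)

lemma length_code_pairs [simp]: "length (code_pairs m) = Suc (length (nat_bits m))"
  by (simp add: code_pairs_def)

lemma nth_code_pairs:
  "i < length (nat_bits m) \<Longrightarrow> code_pairs m ! i = (nat_bits m ! i, nat_bits m ! i)"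
  "code_pairs m ! length (nat_bits m) = stop_pair"
  by (simp_all add: code_pairs_def nth_append)

lemma unpair_simps [simp]:
  "unpair [] = []" "unpair (p # s) = fst p # snd p # unpair s"
  "unpair (s @ t) = unpair s @ unpair t"
  by (auto simp: unpair_def split: prod.splits)

lemma length_unpair [simp]: "length (unpair s) = 2 * length s"
  by (induction s) auto

lemma nth_unpair:
  "j < length s \<Longrightarrow> unpair s ! (2 * j) = fst (s ! j) \<and> unpair s ! Suc (2 * j) = snd (s ! j)"
proof (induction s arbitrary: j)
  case (Cons p s)
  then show ?case by (cases j) auto
qed simp

lemma unpair_code_pairs: "unpair (code_pairs m) = sd_code m"
proof -
  have "unpair (map (\<lambda>b. (b, b)) bs) = concat (map (\<lambda>b. [b, b]) bs)" for bs
    by (induction bs) auto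
  then show ?thesis by (simp add: code_pairs_def sd_code_def)
qed

lemma sd_codes_eq_unpair: "sd_codes ns = unpair (codes_pairs ns)"
  by (induction ns) (auto simp: unpair_code_pairs)

lemma length_sd_code [simp]: "length (sd_code m) = 2 * Suc (length (nat_bits m))"
  by (metis unpair_code_pairs length_unpair length_code_pairs)

lemma length_sd_codes: "length (sd_codes ns) = 2 * length (codes_pairs ns)"
  by (simp add: sd_codes_eq_unpair)

lemma False_in_set_sd_codes: "ns \<noteq> [] \<Longrightarrow> False \<in> set (sd_codes ns)"
  by (cases ns) (auto simp: sd_code_def)

lemma pair_up_unpair [simp]: "pair_up (unpair s) = s"
  by (rule nth_equalityI) (auto simp: pair_up_def nth_unpair)

lemma unpair_pair_up: "even (length x) \<Longrightarrow> unpair (pair_up x) = x"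
proof (rule nth_equalityI)
  assume even: "even (length x)"
  then show "length (unpair (pair_up x)) = length x" by (simp add: pair_up_def)
  fix i assume "i < length (unpair (pair_up x))"
  then have j: "i div 2 < length (pair_up x)"
    using even by (auto simp: pair_up_def elim!: evenE)
  have "pair_up x ! (i div 2) = (x ! (2 * (i div 2)), x ! Suc (2 * (i div 2)))"
    using j by (simp add: pair_up_def)
  then show "unpair (pair_up x) ! i = x ! i"
    using nth_unpair[OF j] by (cases "even i") (auto elim!: evenE oddE)
qed

text \<open>A pair \<open>(False, False)\<close> right before a \<^term>\<open>stop_pair\<close> would be a leading zero bit,
  which \<^const>\<open>nat_bits\<close> never produces.\<close>

fun wf_pairs :: "(bool \<times> bool) list \<Rightarrow> bool" where
  "wf_pairs [] = True"
| "wf_pairs [p] = (p = stop_pair)"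
| "wf_pairs (p # q # s) \<longleftrightarrow>
     p \<noteq> (True, False) \<and> \<not> (p = (False, False) \<and> q = stop_pair) \<and> wf_pairs (q # s)"

lemma wf_pairs_iff:
  "wf_pairs s \<longleftrightarrow> (\<forall>j<length s. s ! j \<noteq> (True, False)) \<and> (s \<noteq> [] \<longrightarrow> last s = stop_pair) \<and>
     (\<forall>j. Suc j < length s \<longrightarrow> \<not> (s ! j = (False, False) \<and> s ! Suc j = stop_pair))"
proof (induction s rule: wf_pairs.induct)
  case (3 p q s)
  have "(\<forall>j. Suc j < length (p # q # s) \<longrightarrow> R j) \<longleftrightarrow>
      R 0 \<and> (\<forall>j. Suc j < length (q # s) \<longrightarrow> R (Suc j))" for R
    by (metis Suc_less_eq length_Cons not0_implies_Suc zero_less_Suc)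
  then show ?case
    using "3" by (auto simp: All_less_Suc2)
qed auto

lemma wf_pairs_code_pairs_append: "wf_pairs s \<Longrightarrow> wf_pairs (code_pairs m @ s)"
proof (induction m rule: nat_bits.induct)
  case (1 m)
  show ?case
  proof (cases "m = 0")
    case True
    then show ?thesis using "1.prems" by (cases s) auto
  next
    case False
    obtain q t where qt: "code_pairs (m div 2) @ s = q # t"
      by (cases "code_pairs (m div 2) @ s") (auto simp: code_pairs_def)
    have "q = stop_pair \<Longrightarrow> m = 1"
      using qt False code_pairs_pos[of "m div 2"] by (cases "m div 2 = 0") auto
    then show ?thesis
      using "1.IH"[OF False "1.prems"] qt False by (auto simp: code_pairs_pos)
  qed
qed

lemma wf_pairs_codes_pairs: "wf_pairs (codes_pairs ns)"
  by (induction ns) (auto intro: wf_pairs_code_pairs_append)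

lemma code_pairs_double: "b \<or> m \<noteq> 0 \<Longrightarrow> code_pairs (of_bool b + 2 * m) = (b, b) # code_pairs m"
  using code_pairs_pos[of "of_bool b + 2 * m"] by (cases b) auto

lemma wf_pairs_imp_codes_pairs: "wf_pairs s \<Longrightarrow> \<exists>ns. s = codes_pairs ns"
proof (induction s rule: wf_pairs.induct)
  case 1
  have "[] = codes_pairs []" by simp
  then show ?case by blast
next
  case (2 p)
  then have "[p] = codes_pairs [0]" by simp
  then show ?case by blast
next
  case (3 p q s)
  then obtain ns where ns: "q # s = codes_pairs ns" by auto
  then obtain m ns' where m: "ns = m # ns'" by (cases ns) auto
  then have qs: "q # s = code_pairs m @ codes_pairs ns'" using ns by simp
  consider "p = stop_pair" | b where "p = (b, b)"
    using "3.prems" by (cases p) (metis (full_types) wf_pairs.simps(3))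
  then show ?case
  proof cases
    case 1
    then have "p # q # s = codes_pairs (0 # ns)" using ns by simp
    then show ?thesis by blast
  next
    case (2 b)
    have "b \<or> m \<noteq> 0" using "3.prems" 2 qs by auto
    then have "p # q # s = codes_pairs ((of_bool b + 2 * m) # ns')"
      using 2 qs by (simp add: code_pairs_double)
    then show ?thesis by blast
  qed
qed

lemma code_pairs_append_inj: "code_pairs m @ s = code_pairs m' @ s' \<Longrightarrow> m = m' \<and> s = s'"
proof (induction m arbitrary: m' rule: nat_bits.induct)
  case (1 m)
  show ?case
  proof (cases "m = 0 \<or> m' = 0")
    case True
    then show ?thesis using "1.prems" by (cases "m = 0"; cases "m' = 0") (auto simp: code_pairs_pos)
  next
    case False
    then have "odd m = odd m'" "code_pairs (m div 2) @ s = code_pairs (m' div 2) @ s'"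
      using "1.prems" by (auto simp: code_pairs_pos)
    moreover have "m div 2 = m' div 2" "s = s'"
      using "1.IH"[of "m' div 2"] calculation False by auto
    ultimately show ?thesis by presburger
  qed
qed

lemma codes_pairs_inj: "codes_pairs ns = codes_pairs ms \<Longrightarrow> ns = ms"
proof (induction ns arbitrary: ms)
  case Nil
  then show ?case by (cases ms) auto
next
  case (Cons n ns)
  then show ?case by (cases ms) (auto dest: code_pairs_append_inj)
qed

lemma sd_codes_inj: "sd_codes ns = sd_codes ms \<Longrightarrow> ns = ms"
  by (metis codes_pairs_inj pair_up_unpair sd_codes_eq_unpair)

lemma inj_sd_code: "inj sd_code"
  by (rule injI) (use sd_codes_inj[of "[_]" "[_]"] in simp)

lemma sd_codes_range_iff: "(\<exists>ns. x = sd_codes ns) \<longleftrightarrow> even (length x) \<and> wf_pairs (pair_up x)"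
  by (metis length_unpair dvd_triv_left pair_up_unpair sd_codes_eq_unpair unpair_pair_up
      wf_pairs_codes_pairs wf_pairs_imp_codes_pairs)

lemma last_codes_pairs: "ns \<noteq> [] \<Longrightarrow> last (codes_pairs ns) = stop_pair"
  by (induction ns) (auto simp: code_pairs_def)

definition is_code_block :: "(bool \<times> bool) list \<Rightarrow> nat \<Rightarrow> nat \<Rightarrow> bool" where
  "is_code_block s a c \<longleftrightarrow> (a = 0 \<or> s ! (a - 1) = stop_pair) \<and>
     (\<forall>j<c - 1. fst (s ! (a + j)) = snd (s ! (a + j))) \<and> s ! (a + c - 1) = stop_pair"

lemma is_code_block_append_shift:
  assumes "p = [] \<or> last p = stop_pair" "1 \<le> c"
  shows "is_code_block (p @ t) (length p + a) c \<longleftrightarrow> is_code_block t a c"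
proof -
  have start: "(length p + a = 0 \<or> (p @ t) ! (length p + a - 1) = stop_pair) \<longleftrightarrow>
      (a = 0 \<or> t ! (a - 1) = stop_pair)"
    using assms(1) by (cases "a = 0"; cases "p = []") (auto simp: nth_append last_conv_nth)
  have "length p + a + c - 1 = length p + (a + c - 1)" using assms(2) by simp
  then show ?thesis
    unfolding is_code_block_def start by (simp add: nth_append add.assoc)
qed

lemma is_code_block_code_pairs_append:
  "is_code_block (code_pairs m @ t) 0 (length (code_pairs m))"
  by (auto simp: is_code_block_def nth_append nth_code_pairs)

lemma is_code_block_code_pairs_appendD:
  assumes "is_code_block (code_pairs m @ t) a c" "a < length (code_pairs m)" "1 \<le> c"
  shows "a = 0 \<and> c = length (code_pairs m)"
proof -
  define l where "l = length (nat_bits m)"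
  have bit: "(code_pairs m @ t) ! i = (nat_bits m ! i, nat_bits m ! i)" if "i < l" for i
    using that by (simp add: nth_append nth_code_pairs l_def)
  have end_stop: "(code_pairs m @ t) ! l = stop_pair"
    by (simp add: nth_append nth_code_pairs l_def)
  have "a = 0"
  proof (rule ccontr)
    assume "a \<noteq> 0"
    then have "a - 1 < l" using assms(2) by (simp add: l_def)
    then show False
      using assms(1) \<open>a \<noteq> 0\<close> bit[of "a - 1"] by (simp add: is_code_block_def)
  qed
  moreover have "\<not> c - 1 < l"
    using assms(1) bit[of "c - 1"] \<open>a = 0\<close> by (auto simp: is_code_block_def)
  moreover have "\<not> l < c - 1"
    using assms(1) end_stop \<open>a = 0\<close> by (auto simp: is_code_block_def)
  ultimately show ?thesis using assms(3) by (simp add: l_def)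
qed

lemma is_code_block_codes_pairs_iff:
  assumes "1 \<le> c" "a + c \<le> length (codes_pairs ns)"
  shows "is_code_block (codes_pairs ns) a c \<longleftrightarrow>
    (\<exists>u m v. ns = u @ m # v \<and> a = length (codes_pairs u) \<and> c = length (code_pairs m))"
proof
  assume "\<exists>u m v. ns = u @ m # v \<and> a = length (codes_pairs u) \<and> c = length (code_pairs m)"
  then obtain u m v where "ns = u @ m # v" "a = length (codes_pairs u)" "c = length (code_pairs m)"
    by blast
  then show "is_code_block (codes_pairs ns) a c"
    using is_code_block_append_shift[of "codes_pairs u" c "code_pairs m @ codes_pairs v" 0]
      is_code_block_code_pairs_append last_codes_pairs[of u] assms(1)
    by (cases "u = []") auto
next
  assume "is_code_block (codes_pairs ns) a c"
  then show "\<exists>u m v. ns = u @ m # v \<and> a = length (codes_pairs u) \<and> c = length (code_pairs m)"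
    using assms(2)
  proof (induction ns arbitrary: a)
    case (Cons m ns)
    show ?case
    proof (cases "a < length (code_pairs m)")
      case True
      then have "m # ns = [] @ m # ns \<and> a = length (codes_pairs []) \<and> c = length (code_pairs m)"
        using is_code_block_code_pairs_appendD Cons.prems(1) assms(1) by auto
      then show ?thesis by blast
    next
      case False
      then have "is_code_block (code_pairs m @ codes_pairs ns)
          (length (code_pairs m) + (a - length (code_pairs m))) c"
        using Cons.prems(1) by simp
      then have "is_code_block (codes_pairs ns) (a - length (code_pairs m)) c"
        using is_code_block_append_shift[of "code_pairs m"] assms(1) by simp
      then obtain u m' v where "ns = u @ m' # v"
        "a - length (code_pairs m) = length (codes_pairs u)" "c = length (code_pairs m')"
        using Cons.IH Cons.prems(2) False by fastforce
      then have "m # ns = (m # u) @ m' # v \<and> a = length (codes_pairs (m # u)) \<and>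
          c = length (code_pairs m')"
        using False by simp
      then show ?thesis by blast
    qed
  qed (use assms(1) in simp)
qed

section \<open>Constant-depth circuits\<close>

declare cdepth.simps(3,4) [simp del]

lemma cdepth_Conj_le_iff [simp]: "cdepth (Conj cs) \<le> d \<longleftrightarrow> 0 < d \<and> (\<forall>c\<in>set cs. cdepth c \<le> d - 1)"
  and cdepth_Disj_le_iff [simp]: "cdepth (Disj cs) \<le> d \<longleftrightarrow> 0 < d \<and> (\<forall>c\<in>set cs. cdepth c \<le> d - 1)"
proof -
  have "fold max ys (a::nat) \<le> e \<longleftrightarrow> a \<le> e \<and> (\<forall>y\<in>set ys. y \<le> e)" for ys a e
    by (induction ys arbitrary: a) auto
  then show "cdepth (Conj cs) \<le> d \<longleftrightarrow> 0 < d \<and> (\<forall>c\<in>set cs. cdepth c \<le> d - 1)"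
    and "cdepth (Disj cs) \<le> d \<longleftrightarrow> 0 < d \<and> (\<forall>c\<in>set cs. cdepth c \<le> d - 1)"
    by (cases d; auto simp: cdepth.simps)+
qed

lemma csize_Conj_le: "\<forall>c\<in>set cs. csize c \<le> B \<Longrightarrow> csize (Conj cs) \<le> Suc (length cs * B)"
  and csize_Disj_le: "\<forall>c\<in>set cs. csize c \<le> B \<Longrightarrow> csize (Disj cs) \<le> Suc (length cs * B)"
  using sum_list_mono[of cs csize "\<lambda>_. B"] by (simp_all add: sum_list_triv)

definition const_circ :: "bool \<Rightarrow> circ" where
  "const_circ b = (if b then Conj [] else Disj [])"

definition lit_circ :: "nat \<Rightarrow> bool \<Rightarrow> circ" where
  "lit_circ i b = (if b then Inp i else Neg (Inp i))"

definition dnf_circ :: "nat list \<Rightarrow> (bool list \<Rightarrow> bool) \<Rightarrow> circ" where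
  "dnf_circ is g = Disj (map (\<lambda>vs. Conj (map (\<lambda>(i, v). lit_circ i v) (zip is vs)))
      (filter g (List.n_lists (length is) [True, False])))"

lemma ceval_const_circ [simp]: "ceval x (const_circ b) = b"
  and cdepth_const_circ [simp]: "cdepth (const_circ b) = 1"
  and csize_const_circ [simp]: "csize (const_circ b) = 1"
  by (simp_all add: const_circ_def cdepth.simps)

lemma ceval_lit_circ: "i < length x \<Longrightarrow> ceval x (lit_circ i b) \<longleftrightarrow> x ! i = b"
  and cdepth_lit_circ: "cdepth (lit_circ i b) \<le> 1"
  and csize_lit_circ: "csize (lit_circ i b) \<le> 2"
  by (auto simp: lit_circ_def)

lemma ceval_dnf_circ:
  assumes "\<forall>i\<in>set is. i < length x"
  shows "ceval x (dnf_circ is g) = g (map ((!) x) is)"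
proof -
  have conj: "ceval x (Conj (map (\<lambda>(i, v). lit_circ i v) (zip is vs))) \<longleftrightarrow> vs = map ((!) x) is"
    if "length vs = length is" for vs
    using that assms by (induction vs "is" rule: list_induct2) (auto simp: ceval_lit_circ)
  have "ceval x (dnf_circ is g) \<longleftrightarrow> (\<exists>vs\<in>set (List.n_lists (length is) [True, False]).
      g vs \<and> ceval x (Conj (map (\<lambda>(i, v). lit_circ i v) (zip is vs))))"
    by (auto simp: dnf_circ_def)
  also have "\<dots> \<longleftrightarrow> (\<exists>vs\<in>set (List.n_lists (length is) [True, False]). g vs \<and> vs = map ((!) x) is)"
    using conj length_n_lists_elem by blast
  also have "\<dots> \<longleftrightarrow> g (map ((!) x) is)"
    by (auto simp: set_n_lists)
  finally show ?thesis .
qed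

lemma cdepth_dnf_circ: "cdepth (dnf_circ is g) \<le> 3"
  by (auto simp: dnf_circ_def lit_circ_def split: prod.splits)

lemma csize_dnf_circ: "csize (dnf_circ is g) \<le> Suc (2 ^ length is * Suc (length is * 2))"
proof -
  let ?terms = "filter g (List.n_lists (length is) [True, False])"
  let ?term = "\<lambda>vs. Conj (map (\<lambda>(i, v). lit_circ i v) (zip is vs))"
  have "csize (?term vs) \<le> Suc (length is * 2)" for vs
    using csize_Conj_le[of "map (\<lambda>(i, v). lit_circ i v) (zip is vs)" 2] csize_lit_circ
    by (fastforce intro: le_trans)
  then have "csize (Disj (map ?term ?terms)) \<le>
      Suc (length (map ?term ?terms) * Suc (length is * 2))"
    by (intro csize_Disj_le) (simp del: csize.simps)
  then have "csize (dnf_circ is g) \<le> Suc (length ?terms * Suc (length is * 2))"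
    by (simp only: dnf_circ_def length_map)
  moreover have "length ?terms \<le> 2 ^ length is"
    using length_filter_le[of g] by (metis length_n_lists numeral_2_eq_2 length_Cons list.size(3))
  ultimately show ?thesis
    by (meson Suc_le_mono le_trans mult_le_mono1)
qed

definition pair_is_circ :: "nat \<Rightarrow> bool \<times> bool \<Rightarrow> circ" where
  "pair_is_circ j p = Conj [lit_circ (2 * j) (fst p), lit_circ (Suc (2 * j)) (snd p)]"

definition doubled_pair_circ :: "nat \<Rightarrow> circ" where
  "doubled_pair_circ j = Disj [pair_is_circ j (True, True), pair_is_circ j (False, False)]"

definition code_block_circ :: "nat \<Rightarrow> nat \<Rightarrow> circ" where
  "code_block_circ a c = Conj ((if a = 0 then [] else [pair_is_circ (a - 1) stop_pair]) @
     map (\<lambda>j. doubled_pair_circ (a + j)) [0..<c - 1] @ [pair_is_circ (a + c - 1) stop_pair])"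

lemma ceval_pair_is_circ: "j < length s \<Longrightarrow> ceval (unpair s) (pair_is_circ j p) \<longleftrightarrow> s ! j = p"
  using nth_unpair[of j s] by (auto simp: pair_is_circ_def ceval_lit_circ prod_eq_iff)

lemma ceval_doubled_pair_circ:
  "j < length s \<Longrightarrow> ceval (unpair s) (doubled_pair_circ j) \<longleftrightarrow> fst (s ! j) = snd (s ! j)"
  by (auto simp: doubled_pair_circ_def ceval_pair_is_circ prod_eq_iff)

lemma ceval_code_block_circ:
  "1 \<le> c \<Longrightarrow> a + c \<le> length s \<Longrightarrow> ceval (unpair s) (code_block_circ a c) \<longleftrightarrow> is_code_block s a c"
  by (auto simp: code_block_circ_def is_code_block_def ceval_pair_is_circ ceval_doubled_pair_circ)

lemma cdepth_pair_is_circ: "cdepth (pair_is_circ j p) \<le> 2"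
  and csize_pair_is_circ: "csize (pair_is_circ j p) \<le> 5"
  using cdepth_lit_circ csize_lit_circ
  by (auto simp: pair_is_circ_def intro: add_mono [of _ 2 _ 2, simplified])

lemma cdepth_doubled_pair_circ: "cdepth (doubled_pair_circ j) \<le> 3"
  and csize_doubled_pair_circ: "csize (doubled_pair_circ j) \<le> 11"
  using cdepth_pair_is_circ csize_pair_is_circ
  by (auto simp: doubled_pair_circ_def intro: add_mono [of _ 5 _ 5, simplified])

lemma cdepth_code_block_circ: "cdepth (code_block_circ a c) \<le> 4"
  by (auto simp: code_block_circ_def cdepth_doubled_pair_circ
      intro: le_trans[OF cdepth_pair_is_circ])

lemma csize_code_block_circ: "csize (code_block_circ a c) \<le> 11 * c + 23"
proof -
  let ?gates = "(if a = 0 then [] else [pair_is_circ (a - 1) stop_pair]) @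
      map (\<lambda>j. doubled_pair_circ (a + j)) [0..<c - 1] @ [pair_is_circ (a + c - 1) stop_pair]"
  have "\<forall>g\<in>set ?gates. csize g \<le> 11"
    by (auto simp: csize_doubled_pair_circ intro: le_trans[OF csize_pair_is_circ])
  then have "csize (code_block_circ a c) \<le> Suc (length ?gates * 11)"
    unfolding code_block_circ_def by (rule csize_Conj_le)
  moreover have "length ?gates \<le> c + 2" by auto
  ultimately show ?thesis by linarith
qed

definition not_sd_codes_circ :: "nat \<Rightarrow> circ" where
  "not_sd_codes_circ n = Disj ([const_circ (odd n)] @
     map (\<lambda>j. pair_is_circ j (True, False)) [0..<n div 2] @
     (if n div 2 = 0 then [] else [Neg (pair_is_circ (n div 2 - 1) stop_pair)]) @
     map (\<lambda>j. Conj [pair_is_circ j (False, False), pair_is_circ (Suc j) stop_pair])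
       [0..<n div 2 - 1])"

lemma ceval_not_sd_codes_circ_unpair:
  "ceval (unpair s) (not_sd_codes_circ (2 * length s)) \<longleftrightarrow> \<not> wf_pairs s"
proof -
  have "ceval (unpair s) (not_sd_codes_circ (2 * length s)) \<longleftrightarrow>
      (\<exists>j<length s. s ! j = (True, False)) \<or> (s \<noteq> [] \<and> last s \<noteq> stop_pair) \<or>
      (\<exists>j. Suc j < length s \<and> s ! j = (False, False) \<and> s ! Suc j = stop_pair)"
    by (simp add: not_sd_codes_circ_def ceval_pair_is_circ last_conv_nth bex_Un)
      (auto simp: less_diff_conv)
  then show ?thesis
    by (auto simp: wf_pairs_iff)
qed

lemma ceval_not_sd_codes_circ: "ceval x (not_sd_codes_circ (length x)) \<longleftrightarrow> \<not> (\<exists>ns. x = sd_codes ns)"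
proof (cases "even (length x)")
  case True
  then have "x = unpair (pair_up x)" and "length x = 2 * length (pair_up x)"
    by (simp add: unpair_pair_up, simp add: pair_up_def)
  then show ?thesis
    using True ceval_not_sd_codes_circ_unpair[of "pair_up x"] by (simp add: sd_codes_range_iff)
next
  case False
  then show ?thesis
    by (simp add: not_sd_codes_circ_def sd_codes_range_iff)
qed

lemma cdepth_not_sd_codes_circ: "cdepth (not_sd_codes_circ n) \<le> 4"
  by (auto simp: not_sd_codes_circ_def intro: le_trans[OF cdepth_pair_is_circ])

lemma csize_not_sd_codes_circ: "csize (not_sd_codes_circ n) \<le> 12 * n + 12"
proof -
  let ?gates = "[const_circ (odd n)] @ map (\<lambda>j. pair_is_circ j (True, False)) [0..<n div 2] @
     (if n div 2 = 0 then [] else [Neg (pair_is_circ (n div 2 - 1) stop_pair)]) @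
     map (\<lambda>j. Conj [pair_is_circ j (False, False), pair_is_circ (Suc j) stop_pair])
       [0..<n div 2 - 1]"
  have "\<forall>g\<in>set ?gates. csize g \<le> 11"
    using add_mono[OF csize_pair_is_circ csize_pair_is_circ]
    by (auto intro: le_trans[OF csize_pair_is_circ])
  then have "csize (not_sd_codes_circ n) \<le> Suc (length ?gates * 11)"
    unfolding not_sd_codes_circ_def by (rule csize_Disj_le)
  moreover have "length ?gates \<le> n + 1" by auto
  ultimately show ?thesis by linarith
qed

section \<open>Letterwise translations of codes are AC0-computable\<close>

lemma AC0_computable_circuit_family:
  assumes "\<forall>n. \<forall>c\<in>set (C n). cdepth c \<le> d"
    and "\<forall>n. length (C n) \<le> a * (n + 1)"
    and "\<forall>n. \<forall>c\<in>set (C n). csize c \<le> b * (n + 1) ^ 3"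
  shows "AC0_computable (\<lambda>x. map (ceval x) (C (length x)))"
  unfolding AC0_computable_def
proof (intro exI conjI allI)
  fix n
  have "sum_list (map csize (C n)) \<le> length (C n) * (b * (n + 1) ^ 3)"
    using sum_list_mono[of "C n" csize "\<lambda>_. b * (n + 1) ^ 3"] assms(3) by (simp add: sum_list_triv)
  also have "\<dots> \<le> a * (n + 1) * (b * (n + 1) ^ 3)"
    using assms(2) by (intro mult_le_mono1) blast
  also have "\<dots> = (a * b) * ((n + 1) * (n + 1) ^ 3)"
    by (simp only: ac_simps)
  also have "\<dots> = (a * b) * (n + 1) ^ 4"
    by (simp only: power_Suc[symmetric] numeral_nat)
  also have "\<dots> \<le> (a * b + 4) * (n + 1) ^ (a * b + 4)"
    by (intro mult_le_mono power_increasing) auto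
  finally show "sum_list (map csize (C n)) \<le> (a * b + 4) * (n + 1) ^ (a * b + 4)" .
qed (use assms(1) in auto)

lemma sd_codes_split_at_scaled_position:
  assumes "q < K * length (sd_codes ns)"
  shows "\<exists>u m v. ns = u @ m # v \<and> K * length (sd_codes u) \<le> q \<and>
    q < K * (length (sd_codes u) + length (sd_code m))"
  using assms
proof (induction ns arbitrary: q)
  case (Cons m ns)
  show ?case
  proof (cases "q < K * length (sd_code m)")
    case True
    then have "m # ns = [] @ m # ns \<and> K * length (sd_codes []) \<le> q \<and>
        q < K * (length (sd_codes []) + length (sd_code m))" by simp
    then show ?thesis by blast
  next
    case False
    define q' where "q' = q - K * length (sd_code m)"
    have "q' < K * length (sd_codes ns)"
      using Cons.prems False by (simp add: q'_def algebra_simps)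
    then obtain u m' v where "ns = u @ m' # v" "K * length (sd_codes u) \<le> q'"
      "q' < K * (length (sd_codes u) + length (sd_code m'))"
      using Cons.IH by blast
    then have "m # ns = (m # u) @ m' # v \<and> K * length (sd_codes (m # u)) \<le> q \<and>
        q < K * (length (sd_codes (m # u)) + length (sd_code m'))"
      using False by (simp add: q'_def algebra_simps; linarith)
    then show ?thesis by blast
  qed
qed simp

text \<open>Output bit \<open>q\<close> lies in the image of the input letter occupying the pairs \<open>a\<close> to
  \<open>a + c - 1\<close>, which \<open>block_bit_circ\<close> guesses and verifies. Codes of at most \<open>L\<close> bits are
  translated by table lookup; longer codes are copied and followed by a padding that depends
  on their length only.\<close>

locale letterwise_translation =
  fixes tr :: "nat \<Rightarrow> bool list" and K L :: nat and P :: "nat \<Rightarrow> bool list"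
  assumes length_tr: "length (tr m) = K * length (sd_code m)"
    and tr_long: "L < length (sd_code m) \<Longrightarrow> tr m = sd_code m @ P (length (sd_code m))"
begin

definition letter_bit_circ :: "nat \<Rightarrow> nat \<Rightarrow> nat \<Rightarrow> circ" where
  "letter_bit_circ a c r =
     (if 2 * c \<le> L then dnf_circ [2 * a..<2 * a + 2 * c] (\<lambda>bs. tr (the_inv sd_code bs) ! r)
      else if r < 2 * c then Inp (2 * a + r) else const_circ (P (2 * c) ! (r - 2 * c)))"

definition block_bit_circ :: "nat \<Rightarrow> nat \<Rightarrow> nat \<Rightarrow> nat \<Rightarrow> circ" where
  "block_bit_circ n q a c =
     (if 1 \<le> c \<and> 2 * (a + c) \<le> n \<and> K * (2 * a) \<le> q \<and> q < K * (2 * (a + c))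
      then Conj [code_block_circ a c, letter_bit_circ a c (q - K * (2 * a))] else const_circ False)"

definition output_bit_circ :: "nat \<Rightarrow> nat \<Rightarrow> circ" where
  "output_bit_circ n q = Disj (concat (map (\<lambda>a. map (block_bit_circ n q a) [0..<n]) [0..<n]))"

definition translation_circs :: "nat \<Rightarrow> circ list" where
  "translation_circs n = map (output_bit_circ n) [0..<K * n]"

lemma length_concat_map_tr: "length (concat (map tr ns)) = K * length (sd_codes ns)"
  by (induction ns) (auto simp: length_tr algebra_simps)

lemma nth_concat_map_tr:
  assumes "ns = u @ m # v" "K * length (sd_codes u) \<le> q"
    and "q < K * (length (sd_codes u) + length (sd_code m))"
  shows "concat (map tr ns) ! q = tr m ! (q - K * length (sd_codes u))"
proof -
  have "concat (map tr ns) = concat (map tr u) @ tr m @ concat (map tr v)"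
    using assms(1) by simp
  moreover have "q - K * length (sd_codes u) < length (tr m)"
    using assms(2,3) by (simp add: length_tr algebra_simps)
  ultimately show ?thesis
    using assms(2) by (simp add: nth_append length_concat_map_tr)
qed

lemma ceval_letter_bit_circ:
  assumes "ns = u @ m # v" "a = length (codes_pairs u)" "c = length (code_pairs m)"
    and "r < length (tr m)"
  shows "ceval (sd_codes ns) (letter_bit_circ a c r) = tr m ! r"
proof -
  have x: "sd_codes ns = sd_codes u @ sd_code m @ sd_codes v" and lu: "length (sd_codes u) = 2 * a"
    and lm: "length (sd_code m) = 2 * c"
    using assms(1-3) sd_codes_eq_unpair[of u] by simp_all
  then have bits: "map ((!) (sd_codes ns)) [2 * a..<2 * a + 2 * c] = sd_code m"
    by (auto intro!: nth_equalityI simp: nth_append)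
  show ?thesis
  proof (cases "2 * c \<le> L")
    case True
    then show ?thesis
      using bits x lu lm
      by (simp add: letter_bit_circ_def ceval_dnf_circ the_inv_f_f[OF inj_sd_code])
  next
    case False
    then have "tr m = sd_code m @ P (2 * c)" using tr_long lm by simp
    then show ?thesis
      using False x lu lm by (simp add: letter_bit_circ_def nth_append)
  qed
qed

lemma ceval_block_bit_circ_at_letter:
  assumes ns: "ns = u @ m # v" and a: "a = length (codes_pairs u)"
    and c: "c = length (code_pairs m)"
    and q: "K * (2 * a) \<le> q" "q < K * (2 * (a + c))"
  shows "ceval (sd_codes ns) (block_bit_circ (length (sd_codes ns)) q a c) \<longleftrightarrow> concat (map tr ns) ! q"
proof -
  have len: "a + c \<le> length (codes_pairs ns)" and "1 \<le> c"
    using ns a c by simp_all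
  moreover have "is_code_block (codes_pairs ns) a c"
    using is_code_block_codes_pairs_iff[of c a ns] len \<open>1 \<le> c\<close> ns a c by blast
  ultimately have "ceval (sd_codes ns) (code_block_circ a c)"
    unfolding sd_codes_eq_unpair by (simp add: ceval_code_block_circ)
  moreover have "q - K * (2 * a) < length (tr m)"
    using q c by (simp add: length_tr algebra_simps)
  moreover have "concat (map tr ns) ! q = tr m ! (q - K * (2 * a))"
    using nth_concat_map_tr[OF ns] q a c by (simp add: length_sd_codes algebra_simps)
  ultimately show ?thesis
    using ceval_letter_bit_circ[OF ns a c] len \<open>1 \<le> c\<close> q
    by (simp add: block_bit_circ_def length_sd_codes)
qed

lemma ceval_output_bit_circ:
  assumes x: "x = sd_codes ns" and q: "q < K * length x"
  shows "ceval x (output_bit_circ (length x) q) \<longleftrightarrow> concat (map tr ns) ! q"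
proof
  assume "ceval x (output_bit_circ (length x) q)"
  then obtain a c where bit: "ceval x (block_bit_circ (length x) q a c)"
    by (auto simp: output_bit_circ_def)
  then have guard: "1 \<le> c" "2 * (a + c) \<le> length x" "K * (2 * a) \<le> q" "q < K * (2 * (a + c))"
    by (auto simp: block_bit_circ_def split: if_splits)
  then have "is_code_block (codes_pairs ns) a c"
    using bit x ceval_code_block_circ[of c a "codes_pairs ns"]
    by (auto simp: block_bit_circ_def sd_codes_eq_unpair)
  then obtain u m v where "ns = u @ m # v" "a = length (codes_pairs u)" "c = length (code_pairs m)"
    using is_code_block_codes_pairs_iff[of c a ns] guard x by (auto simp: length_sd_codes)
  then show "concat (map tr ns) ! q"
    using ceval_block_bit_circ_at_letter guard bit x by blast
next
  assume val: "concat (map tr ns) ! q"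
  obtain u m v where ns: "ns = u @ m # v" and q': "K * length (sd_codes u) \<le> q"
    "q < K * (length (sd_codes u) + length (sd_code m))"
    using sd_codes_split_at_scaled_position[of q K ns] q x by blast
  define a where "a = length (codes_pairs u)"
  define c where "c = length (code_pairs m)"
  have "K * (2 * a) \<le> q" "q < K * (2 * (a + c))"
    using q' by (simp_all add: a_def c_def length_sd_codes algebra_simps)
  then have "ceval x (block_bit_circ (length x) q a c)"
    using ceval_block_bit_circ_at_letter[OF ns a_def c_def] val x by blast
  moreover have "a < length x" "c < length x"
    using ns x by (simp_all add: a_def c_def length_sd_codes)
  then have "block_bit_circ (length x) q a c \<in>
      set (concat (map (\<lambda>a. map (block_bit_circ (length x) q a) [0..<length x]) [0..<length x]))"
    by (auto intro!: bexI[of _ a])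
  ultimately show "ceval x (output_bit_circ (length x) q)"
    unfolding output_bit_circ_def ceval.simps by blast
qed

theorem translation_circs_correct:
  "map (ceval (sd_codes ns)) (translation_circs (length (sd_codes ns))) = concat (map tr ns)"
  by (rule nth_equalityI)
    (simp_all add: translation_circs_def length_concat_map_tr ceval_output_bit_circ)

lemma length_translation_circs [simp]: "length (translation_circs n) = K * n"
  by (simp add: translation_circs_def)

lemma cdepth_letter_bit_circ: "cdepth (letter_bit_circ a c r) \<le> 3"
  using cdepth_dnf_circ by (simp add: letter_bit_circ_def)

lemma cdepth_block_bit_circ: "cdepth (block_bit_circ n q a c) \<le> 5"
  using cdepth_code_block_circ order.trans[OF cdepth_letter_bit_circ, of 4]
  by (simp add: block_bit_circ_def)

lemma cdepth_translation_circs: "c \<in> set (translation_circs n) \<Longrightarrow> cdepth c \<le> 6"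
  using cdepth_block_bit_circ by (auto simp: translation_circs_def output_bit_circ_def)

lemma csize_letter_bit_circ: "csize (letter_bit_circ a c r) \<le> 2 ^ L * (2 * L + 1) + 1"
proof (cases "2 * c \<le> L")
  case True
  have "csize (letter_bit_circ a c r) \<le> Suc (2 ^ (2 * c) * Suc (2 * c * 2))"
    using True csize_dnf_circ[of "[2 * a..<2 * a + 2 * c]"] by (simp add: letter_bit_circ_def)
  also have "\<dots> \<le> Suc (2 ^ L * Suc (L * 2))"
    using True by (intro Suc_le_mono[THEN iffD2] mult_le_mono power_increasing) auto
  finally show ?thesis by simp
qed (simp add: letter_bit_circ_def)

lemma csize_block_bit_circ: "csize (block_bit_circ n q a c) \<le> 2 ^ L * (2 * L + 1) + 11 * n + 25"
  using csize_code_block_circ[of a c] csize_letter_bit_circ[of a c "q - K * (2 * a)"]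
  by (auto simp: block_bit_circ_def)

lemma csize_translation_circs:
  "c \<in> set (translation_circs n) \<Longrightarrow> csize c \<le> (2 ^ L * (2 * L + 1) + 36) * (n + 1) ^ 3"
proof -
  define B where "B = 2 ^ L * (2 * L + 1) + 11 * n + 25"
  assume "c \<in> set (translation_circs n)"
  then obtain q where c: "c = output_bit_circ n q" by (auto simp: translation_circs_def)
  let ?blocks = "concat (map (\<lambda>a. map (block_bit_circ n q a) [0..<n]) [0..<n])"
  have "\<forall>g\<in>set ?blocks. csize g \<le> B"
    using csize_block_bit_circ by (auto simp: B_def)
  then have "csize c \<le> Suc (length ?blocks * B)"
    unfolding c output_bit_circ_def by (rule csize_Disj_le)
  also have "\<dots> = Suc (n * n * B)"
    by (simp add: length_concat sum_list_triv comp_def)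
  also have "\<dots> \<le> (n + 1) * (n + 1) * (B + 1)"
    by (simp add: algebra_simps)
  also have "\<dots> \<le> (n + 1) * (n + 1) * ((2 ^ L * (2 * L + 1) + 36) * (n + 1))"
    by (intro mult_le_mono2) (simp add: B_def algebra_simps)
  also have "\<dots> = (2 ^ L * (2 * L + 1) + 36) * (n + 1) ^ 3"
    by (simp only: power3_eq_cube ac_simps)
  finally show ?thesis .
qed

end

section \<open>Expressions and their codes\<close>

lemma elem_code_bij:
  assumes "finite (carrier M)"
  shows "bij_betw (elem_code M) (carrier M) {..<card (carrier M)}"
proof -
  have "\<exists>f. bij_betw f (carrier M) {..<card (carrier M)}"
    using ex_bij_betw_finite_nat[OF assms] by (simp add: atLeast0LessThan)
  then show ?thesis unfolding elem_code_def by (rule someI_ex)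
qed

definition letter_of_num :: "('g, 'b) monoid_scheme \<Rightarrow> nat \<Rightarrow> 'g letter" where
  "letter_of_num M m =
     (if m mod 3 = 0 then Cst (inv_into (carrier M) (elem_code M) (m div 3))
      else if m mod 3 = 1 then Var (m div 3) else IVar (m div 3))"

definition valid_num :: "('g, 'b) monoid_scheme \<Rightarrow> nat \<Rightarrow> bool" where
  "valid_num M m \<longleftrightarrow> (m mod 3 = 0 \<longrightarrow> m div 3 < card (carrier M))"

text \<open>Stated in simp normal form, in which \<open>3 * i + 1\<close> becomes \<^term>\<open>Suc (3 * i)\<close>.\<close>

lemma letter_of_num_Var [simp]: "letter_of_num M (Suc (3 * i)) = Var i"
  and letter_of_num_IVar [simp]: "letter_of_num M (Suc (Suc (3 * i))) = IVar i"
  and valid_num_Var [simp]: "valid_num M (Suc (3 * i))"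
  and valid_num_IVar [simp]: "valid_num M (Suc (Suc (3 * i)))"
proof -
  have "Suc (3 * i) mod 3 = 1" "Suc (3 * i) div 3 = i"
    "Suc (Suc (3 * i)) mod 3 = 2" "Suc (Suc (3 * i)) div 3 = i"
    by presburger+
  then show "letter_of_num M (Suc (3 * i)) = Var i" "letter_of_num M (Suc (Suc (3 * i))) = IVar i"
    "valid_num M (Suc (3 * i))" "valid_num M (Suc (Suc (3 * i)))"
    by (simp_all add: letter_of_num_def valid_num_def)
qed

lemma expr_over_Nil [simp]: "expr_over M []"
  and expr_over_Cons [simp]: "expr_over M (a # \<alpha>) \<longleftrightarrow> (\<forall>g. a = Cst g \<longrightarrow> g \<in> carrier M) \<and> expr_over M \<alpha>"
  by (auto simp: expr_over_def)

lemma encode_expr_eq_sd_codes: "encode_expr M \<alpha> = sd_codes (map (letter_num M) \<alpha>)"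
  by (simp add: encode_expr_def comp_def)

context
  fixes M :: "('g, 'b) monoid_scheme"
  assumes fin: "finite (carrier M)"
begin

lemma letter_of_num_const:
  assumes "valid_num M m" "m mod 3 = 0"
  shows "letter_of_num M m = Cst (inv_into (carrier M) (elem_code M) (m div 3))"
    and "inv_into (carrier M) (elem_code M) (m div 3) \<in> carrier M"
    and "elem_code M (inv_into (carrier M) (elem_code M) (m div 3)) = m div 3"
proof -
  have "m div 3 \<in> elem_code M ` carrier M"
    using assms elem_code_bij[OF fin] by (auto simp: valid_num_def bij_betw_def)
  then show "inv_into (carrier M) (elem_code M) (m div 3) \<in> carrier M"
    and "elem_code M (inv_into (carrier M) (elem_code M) (m div 3)) = m div 3"
    by (simp_all add: inv_into_into f_inv_into_f)
qed (use assms(2) in \<open>simp add: letter_of_num_def\<close>)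

lemma letter_num_letter_of_num:
  assumes "valid_num M m"
  shows "letter_num M (letter_of_num M m) = m"
proof -
  have m: "m = 3 * (m div 3) + m mod 3" by simp
  consider "m mod 3 = 0" | "m mod 3 = 1" | "m mod 3 = 2" by arith
  then show ?thesis
  proof cases
    case 1
    then show ?thesis using letter_of_num_const[OF assms 1] m by simp
  next
    case 2
    then have "letter_of_num M m = Var (m div 3)" by (simp add: letter_of_num_def)
    then show ?thesis using 2 m by simp
  next
    case 3
    then have "letter_of_num M m = IVar (m div 3)" by (simp add: letter_of_num_def)
    then show ?thesis using 3 m by simp
  qed
qed

lemma expr_over_letter_of_num:
  assumes "valid_num M m"
  shows "expr_over M [letter_of_num M m]"
proof (cases "m mod 3 = 0")
  case True
  then show ?thesis using letter_of_num_const[OF assms True] by (simp add: expr_over_def)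
qed (simp add: letter_of_num_def expr_over_def)

lemma letter_of_num_letter_num:
  assumes "expr_over M [a]"
  shows "letter_of_num M (letter_num M a) = a \<and> valid_num M (letter_num M a)"
proof (cases a)
  case (Cst g)
  then have "g \<in> carrier M" using assms by (simp add: expr_over_def)
  then have "elem_code M g < card (carrier M)"
    and "inv_into (carrier M) (elem_code M) (elem_code M g) = g"
    using elem_code_bij[OF fin] by (auto simp: bij_betw_def)
  then show ?thesis
    using Cst by (simp add: letter_of_num_def valid_num_def)
qed simp_all

lemma expr_over_map_letter_of_num:
  "\<forall>m\<in>set ms. valid_num M m \<Longrightarrow> expr_over M (map (letter_of_num M) ms)"
  using expr_over_letter_of_num by (auto simp: expr_over_def)

lemma sd_codes_in_EQN_ID_lang_iff:
  "sd_codes ns \<in> EQN_ID_lang M \<longleftrightarrow> (\<forall>m\<in>set ns. valid_num M m) \<and> map (letter_of_num M) ns \<in> EQN_ID M"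
proof
  assume "sd_codes ns \<in> EQN_ID_lang M"
  then obtain \<alpha> where \<alpha>: "\<alpha> \<in> EQN_ID M" "sd_codes ns = sd_codes (map (letter_num M) \<alpha>)"
    unfolding EQN_ID_lang_def encode_expr_eq_sd_codes by blast
  from \<alpha>(2) have ns: "ns = map (letter_num M) \<alpha>" by (rule sd_codes_inj)
  have "\<forall>a\<in>set \<alpha>. expr_over M [a]" using \<alpha>(1) by (auto simp: EQN_ID_def expr_over_def)
  then show "(\<forall>m\<in>set ns. valid_num M m) \<and> map (letter_of_num M) ns \<in> EQN_ID M"
    using \<alpha>(1) ns letter_of_num_letter_num by (simp add: map_idI)
next
  assume valid: "(\<forall>m\<in>set ns. valid_num M m) \<and> map (letter_of_num M) ns \<in> EQN_ID M"
  then have "map (letter_num M) (map (letter_of_num M) ns) = ns"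
    using letter_num_letter_of_num by (simp add: map_idI)
  then have "sd_codes ns = encode_expr M (map (letter_of_num M) ns)"
    by (simp only: encode_expr_eq_sd_codes)
  then show "sd_codes ns \<in> EQN_ID_lang M" using valid by (simp add: EQN_ID_lang_def)
qed

end

lemma EQN_ID_lang_imp_sd_codes: "x \<in> EQN_ID_lang M \<Longrightarrow> \<exists>ns. x = sd_codes ns"
  unfolding EQN_ID_lang_def encode_expr_eq_sd_codes by blast

lemma eval_expr_cong:
  "(\<And>i. Var i \<in> set \<alpha> \<or> IVar i \<in> set \<alpha> \<Longrightarrow> \<sigma> i = \<sigma>' i) \<Longrightarrow> eval_expr M \<sigma> \<alpha> = eval_expr M \<sigma>' \<alpha>"
proof (induction \<alpha>)
  case (Cons a \<alpha>)
  have "eval_letter M \<sigma> a = eval_letter M \<sigma>' a"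
    using Cons.prems by (cases a) auto
  moreover have "eval_expr M \<sigma> \<alpha> = eval_expr M \<sigma>' \<alpha>"
    using Cons.prems by (intro Cons.IH) auto
  ultimately show ?case by simp
qed simp

context group
begin

lemma eval_letter_closed: "assignment G \<sigma> \<Longrightarrow> expr_over G [a] \<Longrightarrow> eval_letter G \<sigma> a \<in> carrier G"
  by (cases a) (auto simp: assignment_def expr_over_def)

lemma eval_expr_closed: "assignment G \<sigma> \<Longrightarrow> expr_over G \<alpha> \<Longrightarrow> eval_expr G \<sigma> \<alpha> \<in> carrier G"
  by (induction \<alpha>) (auto simp: eval_letter_closed)

lemma eval_expr_append:
  "assignment G \<sigma> \<Longrightarrow> expr_over G \<alpha> \<Longrightarrow> expr_over G \<beta> \<Longrightarrow>
   eval_expr G \<sigma> (\<alpha> @ \<beta>) = eval_expr G \<sigma> \<alpha> \<otimes> eval_expr G \<sigma> \<beta>"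
proof (induction \<alpha>)
  case (Cons a \<alpha>)
  then show ?case by (simp add: m_assoc eval_expr_closed eval_letter_closed)
qed (simp add: eval_expr_closed)

lemma eval_expr_replicate:
  "assignment G \<sigma> \<Longrightarrow> expr_over G \<alpha> \<Longrightarrow>
   eval_expr G \<sigma> (concat (replicate k \<alpha>)) = eval_expr G \<sigma> \<alpha> [^] k"
proof (induction k)
  case (Suc k)
  have "expr_over G (concat (replicate k \<alpha>))" using Suc.prems by (auto simp: expr_over_def)
  then have "eval_expr G \<sigma> (concat (replicate (Suc k) \<alpha>)) = eval_expr G \<sigma> \<alpha> \<otimes> eval_expr G \<sigma> \<alpha> [^] k"
    using Suc by (simp add: eval_expr_append)
  also have "\<dots> = eval_expr G \<sigma> \<alpha> [^] Suc k"
    by (rule nat_pow_Suc2[symmetric]) (rule eval_expr_closed[OF Suc.prems])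
  finally show ?case .
qed simp

end

section \<open>Reducing the identities of \<open>G/H\<close> to those of \<open>G\<close>\<close>

text \<open>\<open>cancel_pairs i k\<close> encodes \<open>(X\<^sub>i X\<^sub>i\<^sup>-\<^sup>1)\<^sup>k\<close>. One factor takes 10 bits for \<open>i = 0\<close> and 16 bits
  for \<open>i = 1\<close>, and \<open>10 a + 16 b\<close> attains every even length from 64 on.\<close>

definition cancel_pairs :: "nat \<Rightarrow> nat \<Rightarrow> nat list" where
  "cancel_pairs i k = concat (replicate k [3 * i + 1, 3 * i + 2])"

definition pad_nums :: "nat \<Rightarrow> nat list" where
  "pad_nums t = cancel_pairs 0 ((t - 8 * (2 * t mod 5)) div 5) @ cancel_pairs 1 (2 * t mod 5)"

lemma length_sd_codes_pad_nums:
  assumes "32 \<le> t"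
  shows "length (sd_codes (pad_nums t)) = 2 * t"
proof -
  define b where "b = 2 * t mod 5"
  have le: "8 * b \<le> t" using assms by (simp add: b_def)
  have "(8 * b) mod 5 = (t + 5 * (3 * t)) mod 5"
    by (simp add: b_def mod_mult_right_eq algebra_simps)
  also have "\<dots> = t mod 5" by (rule mod_mult_self2)
  finally have "5 dvd (t - 8 * b)" using le by (metis mod_eq_dvd_iff_nat)
  then have split: "5 * ((t - 8 * b) div 5) + 8 * b = t" using le by simp
  have "length (sd_codes (cancel_pairs 0 k)) = 10 * k"
    and "length (sd_codes (cancel_pairs 1 k)) = 16 * k" for k
    by (induction k) (simp_all add: cancel_pairs_def nat_bits_pos)
  then show ?thesis
    using split by (simp add: pad_nums_def b_def[symmetric])
qed

lemma set_pad_nums: "set (pad_nums t) \<subseteq> {1, 2, 4, 5}"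
  by (auto simp: pad_nums_def cancel_pairs_def)

lemma valid_num_pad_nums: "k \<in> set (pad_nums t) \<Longrightarrow> valid_num M k"
  using set_pad_nums by (fastforce simp: valid_num_def)

lemma (in group) eval_expr_pad_nums:
  assumes "assignment G \<sigma>"
  shows "eval_expr G \<sigma> (map (letter_of_num G) (pad_nums t)) = \<one>"
proof -
  have cancel: "eval_expr G \<sigma> (map (letter_of_num G) (cancel_pairs i k)) = \<one>"
    and closed: "expr_over G (map (letter_of_num G) (cancel_pairs i k))" for k i
  proof (induction k)
    case (Suc k)
    have "\<sigma> i \<in> carrier G" using assms by (simp add: assignment_def)
    then show "eval_expr G \<sigma> (map (letter_of_num G) (cancel_pairs i (Suc k))) = \<one>"
      using Suc by (simp add: cancel_pairs_def m_assoc[symmetric])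
  qed (simp_all add: cancel_pairs_def)
  show ?thesis
    using cancel closed by (simp add: pad_nums_def eval_expr_append[OF assms])
qed

fun shifted_letter :: "nat \<Rightarrow> 'g letter \<Rightarrow> 'g letter" where
  "shifted_letter N (Cst g) = Cst g"
| "shifted_letter N (Var i) = Var (N + i)"
| "shifted_letter N (IVar i) = IVar (N + i)"

lemma length_sd_code_shifted_letter:
  "length (sd_code (letter_num M (shifted_letter (2 ^ n) a))) \<le> (2 * letter_num M a + 8) * (n + 1)"
proof -
  have var: "length (sd_code (3 * (2 ^ n + i) + k)) \<le> 2 * (n + i + 4)" if "k \<le> 2" for i k
  proof -
    define N :: nat where "N = 2 ^ n"
    have "i + 1 \<le> 2 ^ i" using less_exp[of i] by (simp add: Suc_le_eq)
    then have "N * i + N \<le> N * 2 ^ i"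
      using mult_le_mono2[of "i + 1" "2 ^ i" N] by (simp add: algebra_simps)
    moreover have "1 \<le> N" "i \<le> N * i"
      using mult_le_mono1[of 1 N i] by (simp_all add: N_def)
    ultimately have "3 * (N + i) + k < 8 * (N * 2 ^ i)"
      using that by (simp only: algebra_simps)
    then have "3 * (2 ^ n + i) + k < 2 ^ (n + i + 3)"
      by (simp add: power_add N_def)
    then show ?thesis using length_nat_bits_le_of_less by fastforce
  qed
  show ?thesis
  proof (cases a)
    case (Cst g)
    then show ?thesis using length_nat_bits_le[of "3 * elem_code M g"] by simp
  next
    case (Var i)
    then show ?thesis using var[of 1 i] by (simp add: algebra_simps)
  next
    case (IVar i)
    then show ?thesis using var[of 2 i] by (simp add: algebra_simps)
  qed
qed

locale quotient_reduction = group G for G :: "('a, 'b) monoid_scheme" (structure) +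
  fixes H :: "'a set" and \<beta> :: "'a expr"
  assumes finite_G: "finite (carrier G)" and normal_H: "H \<lhd> G"
    and expr_over_\<beta>: "expr_over G \<beta>"
    and H_eq: "H = {g \<in> carrier G. \<forall>\<sigma>. assignment G \<sigma> \<longrightarrow> \<sigma> 0 = g \<longrightarrow> eval_expr G \<sigma> \<beta> = \<one>}"
begin

abbreviation Q :: "'a set monoid" where
  "Q \<equiv> G Mod H"

definition rep :: "'a set \<Rightarrow> 'a" where
  "rep c = (SOME g. g \<in> c)"

lemma group_Q: "group Q"
  using normal_H by (rule normal.factorgroup_is_group)

lemma finite_Q: "finite (carrier Q)"
  using finite_G by (simp add: carrier_FactGroup)

lemma rep_coset:
  assumes "c \<in> carrier Q"
  shows "rep c \<in> carrier G" and "H #>\<^bsub>G\<^esub> rep c = c"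
proof -
  have subgroup: "subgroup H G" using normal_H by (rule normal_imp_subgroup)
  obtain a where a: "a \<in> carrier G" "c = H #>\<^bsub>G\<^esub> a"
    using assms by (auto simp: carrier_FactGroup)
  then have "a \<in> c" using rcos_self[OF _ subgroup] by simp
  then have "rep c \<in> c" unfolding rep_def by (rule someI)
  then show "rep c \<in> carrier G" and "H #>\<^bsub>G\<^esub> rep c = c"
    using a subgroup repr_independence[OF _ a(1) subgroup]
      r_coset_subset_G[OF subgroup.subset[OF subgroup] a(1)]
    by auto
qed

lemma assignment_rep: "assignment Q \<rho> \<Longrightarrow> assignment G (\<lambda>i. rep (\<rho> i))"
  by (simp add: assignment_def rep_coset)

lemma assignment_coset: "assignment G \<sigma> \<Longrightarrow> assignment Q (\<lambda>i. H #>\<^bsub>G\<^esub> \<sigma> i)"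
  by (auto simp: assignment_def carrier_FactGroup)

text \<open>Invalid constants of \<open>G/H\<close> must stay invalid in \<open>G\<close>.\<close>

definition lift_num :: "nat \<Rightarrow> nat" where
  "lift_num m =
     (if valid_num Q m then letter_num G (map_letter rep (letter_of_num Q m))
      else if valid_num G m then 3 * card (carrier G) else m)"

lemma expr_over_lift_letter:
  assumes "valid_num Q m"
  shows "expr_over G [map_letter rep (letter_of_num Q m)]"
  using expr_over_letter_of_num[OF finite_Q assms] rep_coset
  by (cases "letter_of_num Q m") (auto simp: expr_over_def)

lemma letter_of_num_lift_num:
  "valid_num Q m \<Longrightarrow> letter_of_num G (lift_num m) = map_letter rep (letter_of_num Q m)"
  using letter_of_num_letter_num[OF finite_G expr_over_lift_letter] by (simp add: lift_num_def)

lemma valid_num_lift_num: "valid_num G (lift_num m) \<longleftrightarrow> valid_num Q m"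
  using letter_of_num_letter_num[OF finite_G expr_over_lift_letter]
  by (auto simp: lift_num_def valid_num_def)

lemma lift_num_cases: "lift_num m = m \<or> (lift_num m \<le> 3 * card (carrier G) \<and> lift_num m mod 3 = 0)"
proof (cases "valid_num Q m")
  case True
  show ?thesis
  proof (cases "letter_of_num Q m")
    case (Cst c)
    then have "rep c \<in> carrier G"
      using expr_over_letter_of_num[OF finite_Q True] rep_coset by (simp add: expr_over_def)
    then have "elem_code G (rep c) < card (carrier G)"
      using elem_code_bij[OF finite_G] by (auto simp: bij_betw_def)
    then show ?thesis using True Cst by (simp add: lift_num_def)
  next
    case (Var i)
    then show ?thesis
      using True letter_num_letter_of_num[OF finite_Q True] by (simp add: lift_num_def)
  next
    case (IVar i)
    then show ?thesis
      using True letter_num_letter_of_num[OF finite_Q True] by (simp add: lift_num_def)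
  qed
qed (simp add: lift_num_def)

lemma lift_num_large:
  assumes "3 * card (carrier G) \<le> m"
  shows "lift_num m = m"
proof (cases "m mod 3 = 0")
  case True
  have "card (carrier Q) \<le> card (carrier G)"
    using finite_G by (simp add: carrier_FactGroup card_image_le)
  then have "\<not> valid_num Q m" "\<not> valid_num G m"
    using True assms by (simp_all add: valid_num_def)
  then show ?thesis by (simp add: lift_num_def)
next
  case False
  then have valid: "valid_num Q m" by (simp add: valid_num_def)
  have m: "m = 3 * (m div 3) + m mod 3" by simp
  consider "m mod 3 = 1" | "m mod 3 = 2" using False by arith
  then show ?thesis
  proof cases
    case 1
    then have "letter_of_num Q m = Var (m div 3)" by (simp add: letter_of_num_def)
    then show ?thesis using valid 1 m by (simp add: lift_num_def)
  next
    case 2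
    then have "letter_of_num Q m = IVar (m div 3)" by (simp add: letter_of_num_def)
    then show ?thesis using valid 2 m by (simp add: lift_num_def)
  qed
qed

definition K :: nat where
  "K = 3 * card (carrier G) + 40"

definition L :: nat where
  "L = 6 * card (carrier G) + 2"

definition translate_num :: "nat \<Rightarrow> nat list" where
  "translate_num m =
     lift_num m # pad_nums ((K * length (sd_code m) - length (sd_code (lift_num m))) div 2)"

definition lifted_nums :: "nat list \<Rightarrow> nat list" where
  "lifted_nums ns = concat (map translate_num ns)"

lemma length_sd_codes_translate_num: "length (sd_codes (translate_num m)) = K * length (sd_code m)"
proof -
  define d where "d = K * length (sd_code m) - length (sd_code (lift_num m))"
  have big: "length (sd_code (lift_num m)) + 64 \<le> K * length (sd_code m)"
  proof (cases "lift_num m = m")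
    case True
    have "2 \<le> length (sd_code m)" by simp
    then show ?thesis unfolding True K_def by (simp add: algebra_simps)
  next
    case False
    then have "length (nat_bits (lift_num m)) \<le> 3 * card (carrier G)"
      using lift_num_cases[of m] length_nat_bits_le le_trans by blast
    moreover have "K * 2 \<le> K * length (sd_code m)" by (intro mult_le_mono2) simp
    ultimately show ?thesis by (simp add: K_def)
  qed
  have "even d" by (simp add: d_def)
  moreover have "32 \<le> d div 2" using big by (simp add: d_def)
  ultimately have "length (sd_codes (pad_nums (d div 2))) = d"
    by (simp add: length_sd_codes_pad_nums)
  moreover have "length (sd_codes (translate_num m)) =
      length (sd_code (lift_num m)) + length (sd_codes (pad_nums (d div 2)))"
    by (simp add: translate_num_def d_def del: length_sd_code)
  ultimately show ?thesis
    using big d_def by linarith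
qed

lemma translate_num_long:
  assumes "L < length (sd_code m)"
  shows "sd_codes (translate_num m) =
    sd_code m @ sd_codes (pad_nums ((K * length (sd_code m) - length (sd_code m)) div 2))"
proof -
  have "3 * card (carrier G) \<le> m"
    using assms length_nat_bits_le[of m] by (simp add: L_def)
  then have "lift_num m = m"
    by (rule lift_num_large)
  then show ?thesis by (simp add: translate_num_def)
qed

sublocale translation: letterwise_translation "\<lambda>m. sd_codes (translate_num m)" K L
  "\<lambda>l. sd_codes (pad_nums ((K * l - l) div 2))"
  by unfold_locales (simp_all add: length_sd_codes_translate_num translate_num_long)

abbreviation eval_nums :: "(nat \<Rightarrow> 'a) \<Rightarrow> nat list \<Rightarrow> 'a" where
  "eval_nums \<sigma> ks \<equiv> eval_expr G \<sigma> (map (letter_of_num G) ks)"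

lemma valid_lifted_nums: "(\<forall>k\<in>set (lifted_nums ns). valid_num G k) \<longleftrightarrow> (\<forall>m\<in>set ns. valid_num Q m)"
  using valid_num_lift_num valid_num_pad_nums by (auto simp: lifted_nums_def translate_num_def)

lemma lifted_nums_var_bound:
  assumes "k \<in> set (lifted_nums ns)" "k mod 3 \<noteq> 0"
  shows "k div 3 < 2 ^ length (sd_codes ns)"
proof -
  obtain m where m: "m \<in> set ns" "k \<in> set (translate_num m)"
    using assms(1) by (auto simp: lifted_nums_def)
  have len: "length (sd_code m) \<le> length (sd_codes ns)"
    using m(1) by (induction ns) auto
  show ?thesis
  proof (cases "k = lift_num m")
    case True
    then have "k = m" using lift_num_cases[of m] assms(2) by auto
    have "m < 2 ^ length (nat_bits m)" by (rule less_power_length_nat_bits)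
    also have "\<dots> \<le> 2 ^ length (sd_codes ns)" using len by (intro power_increasing) auto
    finally show ?thesis using \<open>k = m\<close> by linarith
  next
    case False
    then have "k div 3 \<le> 1" using m(2) set_pad_nums by (fastforce simp: translate_num_def)
    moreover have "(2::nat) ^ 1 \<le> 2 ^ length (sd_codes ns)"
      using len by (intro power_increasing) auto
    ultimately show ?thesis by simp
  qed
qed

lemma group_hom_coset: "group_hom G Q (\<lambda>g. H #>\<^bsub>G\<^esub> g)"
  using is_group group_Q normal.r_coset_hom_Mod[OF normal_H]
  by (simp add: group_hom_def group_hom_axioms_def)

lemma coset_eval_lift_letter:
  assumes "expr_over Q [a]" "assignment G \<sigma>"
  shows "H #>\<^bsub>G\<^esub> eval_letter G \<sigma> (map_letter rep a) = eval_letter Q (\<lambda>i. H #>\<^bsub>G\<^esub> \<sigma> i) a"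
proof (cases a)
  case (Cst c)
  then show ?thesis using assms(1) rep_coset by (simp add: expr_over_def)
next
  case (IVar i)
  then show ?thesis
    using assms(2) group_hom.hom_inv[OF group_hom_coset] by (simp add: assignment_def)
qed simp

lemma coset_eval_lifted_nums:
  assumes "\<forall>m\<in>set ns. valid_num Q m" "assignment G \<sigma>"
  shows "H #> eval_nums \<sigma> (lifted_nums ns) =
    eval_expr Q (\<lambda>i. H #> \<sigma> i) (map (letter_of_num Q) ns)"
  using assms(1)
proof (induction ns)
  case Nil
  then show ?case using group_hom.hom_one[OF group_hom_coset] by (simp add: lifted_nums_def)
next
  case (Cons m ns)
  let ?l = "eval_letter G \<sigma> (letter_of_num G (lift_num m))"
  have valid: "valid_num Q m" "\<forall>m\<in>set ns. valid_num Q m" using Cons.prems by auto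
  have closed: "expr_over G (map (letter_of_num G) (lifted_nums ns))"
    "expr_over G (map (letter_of_num G) (pad_nums t))" for t
    using valid(2) valid_lifted_nums valid_num_pad_nums
    by (blast intro: expr_over_map_letter_of_num[OF finite_G])+
  have "expr_over G [letter_of_num G (lift_num m)]"
    using valid(1) valid_num_lift_num expr_over_letter_of_num[OF finite_G] by blast
  then have l_closed: "?l \<in> carrier G" using eval_letter_closed[OF assms(2)] by blast
  have r_closed: "eval_nums \<sigma> (lifted_nums ns) \<in> carrier G"
    using eval_expr_closed[OF assms(2) closed(1)] .
  have "eval_nums \<sigma> (lifted_nums (m # ns)) = ?l \<otimes> eval_nums \<sigma> (lifted_nums ns)"
    using closed eval_expr_append[OF assms(2)] eval_expr_closed[OF assms(2)]
      eval_expr_pad_nums[OF assms(2)]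
    by (simp add: lifted_nums_def translate_num_def)
  then have "H #> eval_nums \<sigma> (lifted_nums (m # ns)) =
      (H #> ?l) <#> (H #> eval_nums \<sigma> (lifted_nums ns))"
    using group_hom.hom_mult[OF group_hom_coset l_closed r_closed] by simp
  also have "H #> ?l = eval_letter Q (\<lambda>i. H #> \<sigma> i) (letter_of_num Q m)"
    using letter_of_num_lift_num[OF valid(1)]
      coset_eval_lift_letter[OF expr_over_letter_of_num[OF finite_Q valid(1)] assms(2)] by simp
  finally show ?case using Cons.IH[OF valid(2)] by simp
qed

text \<open>\<^const>\<open>None\<close> stands for the lifted input \<open>\<alpha>'\<close>. The output is \<open>\<beta>\<close> with \<open>X := \<alpha>'\<close>,
  \<open>X\<^sup>-\<^sup>1 := \<alpha>'\<^sup>|\<^sup>G\<^sup>|\<^sup>-\<^sup>1\<close> and \<open>Y\<^sub>i := X\<^sub>2\<^sub>^\<^sub>n\<^sub>+\<^sub>i\<close>, followed by \<open>\<alpha>'\<^sup>|\<^sup>G\<^sup>| = 1\<close>; this last factor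
  makes every letter of \<open>\<alpha>'\<close> occur in the output, so that invalid input letters are detected.\<close>

definition letter_segments :: "nat \<Rightarrow> 'a letter \<Rightarrow> nat list option list" where
  "letter_segments n a =
     (if a = Var 0 then [None]
      else if a = IVar 0 then replicate (card (carrier G) - 1) None
      else [Some [letter_num G (shifted_letter (2 ^ n) a)]])"

definition output_segments :: "nat \<Rightarrow> nat list option list" where
  "output_segments n = concat (map (letter_segments n) \<beta>) @ replicate (card (carrier G)) None"

definition segment_nums :: "nat list \<Rightarrow> nat list option \<Rightarrow> nat list" where
  "segment_nums ns s = (case s of None \<Rightarrow> lifted_nums ns | Some ks \<Rightarrow> ks)"

definition output_nums :: "nat \<Rightarrow> nat list \<Rightarrow> nat list" where
  "output_nums n ns = concat (map (segment_nums ns) (output_segments n))"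

lemma card_G_pos: "0 < card (carrier G)"
  using finite_G one_closed by (auto simp: card_gt_0_iff)

lemma valid_fixed_segment:
  assumes "Some ks \<in> set (output_segments n)" "k \<in> set ks"
  shows "valid_num G k"
proof -
  obtain a where "a \<in> set \<beta>" "a \<noteq> Var 0" "a \<noteq> IVar 0" "k = letter_num G (shifted_letter (2 ^ n) a)"
    using assms by (auto simp: output_segments_def letter_segments_def split: if_splits)
  moreover have "expr_over G [shifted_letter (2 ^ n) a]"
    using expr_over_\<beta> \<open>a \<in> set \<beta>\<close> by (cases a) (auto simp: expr_over_def)
  ultimately show ?thesis
    using letter_of_num_letter_num[OF finite_G] by blast
qed

lemma valid_output_nums:
  "(\<forall>k\<in>set (output_nums n ns). valid_num G k) \<longleftrightarrow> (\<forall>m\<in>set ns. valid_num Q m)"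
proof -
  have "None \<in> set (output_segments n)"
    using card_G_pos by (simp add: output_segments_def)
  then have "set (lifted_nums ns) \<subseteq> set (output_nums n ns)"
    by (force simp: output_nums_def segment_nums_def)
  moreover have "k \<in> set (lifted_nums ns) \<or> valid_num G k" if "k \<in> set (output_nums n ns)" for k
    using that valid_fixed_segment
    by (auto simp: output_nums_def segment_nums_def split: option.splits)
  ultimately show ?thesis
    using valid_lifted_nums by blast
qed

lemma eval_nums_closed: "assignment G \<sigma> \<Longrightarrow> \<forall>k\<in>set ks. valid_num G k \<Longrightarrow> eval_nums \<sigma> ks \<in> carrier G"
  using eval_expr_closed expr_over_map_letter_of_num[OF finite_G] by blast

lemma eval_nums_append:
  "assignment G \<sigma> \<Longrightarrow> \<forall>k\<in>set ks. valid_num G k \<Longrightarrow> \<forall>k\<in>set ls. valid_num G k \<Longrightarrow>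
    eval_nums \<sigma> (ks @ ls) = eval_nums \<sigma> ks \<otimes> eval_nums \<sigma> ls"
  using eval_expr_append expr_over_map_letter_of_num[OF finite_G] by simp

lemma eval_nums_replicate:
  "assignment G \<sigma> \<Longrightarrow> \<forall>k\<in>set ks. valid_num G k \<Longrightarrow>
    eval_nums \<sigma> (concat (replicate r ks)) = eval_nums \<sigma> ks [^] r"
  using eval_expr_replicate expr_over_map_letter_of_num[OF finite_G] by (simp add: map_concat)

lemma pow_card_eq_one: "x \<in> carrier G \<Longrightarrow> x [^] card (carrier G) = \<one>"
  using pow_order_eq_1 finite_G by (simp add: order_def)

lemma pow_card_minus_one_eq_inv: "x \<in> carrier G \<Longrightarrow> x [^] (card (carrier G) - 1) = inv x"
  using pow_card_eq_one card_G_pos nat_pow_Suc[of x "card (carrier G) - 1"]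
  by (intro inv_equality[symmetric]) auto

lemma output_nums_eq:
  "output_nums n ns = concat (map (\<lambda>a. concat (map (segment_nums ns) (letter_segments n a))) \<beta>) @
    concat (replicate (card (carrier G)) (lifted_nums ns))"
proof -
  have "concat (map (segment_nums ns) (concat (map (letter_segments n) as))) =
      concat (map (\<lambda>a. concat (map (segment_nums ns) (letter_segments n a))) as)" for as
    by (induction as) auto
  then show ?thesis
    by (simp add: output_nums_def output_segments_def map_replicate_const segment_nums_def)
qed

lemma eval_letter_segments:
  fixes n :: nat
  assumes valid: "\<forall>m\<in>set ns. valid_num Q m" and \<sigma>: "assignment G \<sigma>" and a: "a \<in> set \<beta>"
  defines "\<tau> \<equiv> \<lambda>j. if j = 0 then eval_nums \<sigma> (lifted_nums ns) else \<sigma> (2 ^ n + j)"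
  shows "eval_nums \<sigma> (concat (map (segment_nums ns) (letter_segments n a))) = eval_letter G \<tau> a"
proof -
  have valid_lifted: "\<forall>k\<in>set (lifted_nums ns). valid_num G k"
    using valid valid_lifted_nums by blast
  consider "a = Var 0" | "a = IVar 0" | "a \<noteq> Var 0" "a \<noteq> IVar 0" by blast
  then show ?thesis
  proof cases
    case 2
    then show ?thesis
      using eval_nums_replicate[OF \<sigma> valid_lifted] pow_card_minus_one_eq_inv
        eval_nums_closed[OF \<sigma> valid_lifted]
      by (simp add: letter_segments_def segment_nums_def map_replicate_const \<tau>_def)
  next
    case 3
    let ?b = "shifted_letter (2 ^ n) a"
    have "expr_over G [?b]"
      using expr_over_\<beta> a by (cases a) (auto simp: expr_over_def)
    then have "letter_of_num G (letter_num G ?b) = ?b" and "eval_letter G \<sigma> ?b \<in> carrier G"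
      using letter_of_num_letter_num[OF finite_G] eval_letter_closed[OF \<sigma>] by blast+
    then have "eval_nums \<sigma> (concat (map (segment_nums ns) (letter_segments n a))) =
        eval_letter G \<sigma> ?b"
      using 3 by (simp add: letter_segments_def segment_nums_def)
    also have "\<dots> = eval_letter G \<tau> a"
      using 3 by (cases a) (simp_all add: \<tau>_def)
    finally show ?thesis .
  qed (simp add: letter_segments_def segment_nums_def \<tau>_def)
qed

lemma eval_output_nums:
  fixes n :: nat
  assumes valid: "\<forall>m\<in>set ns. valid_num Q m" and \<sigma>: "assignment G \<sigma>"
  defines "\<tau> \<equiv> \<lambda>j. if j = 0 then eval_nums \<sigma> (lifted_nums ns) else \<sigma> (2 ^ n + j)"
  shows "eval_nums \<sigma> (output_nums n ns) = eval_expr G \<tau> \<beta>"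
proof -
  let ?letter = "\<lambda>a. concat (map (segment_nums ns) (letter_segments n a))"
  have valid_lifted: "\<forall>k\<in>set (lifted_nums ns). valid_num G k"
    using valid valid_lifted_nums by blast
  have t: "eval_nums \<sigma> (lifted_nums ns) \<in> carrier G"
    using eval_nums_closed[OF \<sigma> valid_lifted] .
  have \<tau>: "assignment G \<tau>" using \<sigma> t by (simp add: assignment_def \<tau>_def)
  have valid_output: "\<forall>k\<in>set (output_nums n ns). valid_num G k"
    using valid valid_output_nums by blast
  have "eval_nums \<sigma> (concat (map ?letter \<beta>')) = eval_expr G \<tau> \<beta>'" if "set \<beta>' \<subseteq> set \<beta>" for \<beta>'
    using that
  proof (induction \<beta>')
    case (Cons a \<beta>')
    have "\<forall>k\<in>set (concat (map ?letter (a # \<beta>'))). valid_num G k"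
      using valid_output Cons.prems by (auto simp: output_nums_eq)
    then show ?case
      using Cons eval_letter_segments[OF valid \<sigma>, of a n] eval_nums_append[OF \<sigma>]
      by (simp add: \<tau>_def)
  qed simp
  then show ?thesis
    using valid_output eval_nums_append[OF \<sigma>] eval_nums_replicate[OF \<sigma> valid_lifted]
      pow_card_eq_one[OF t] eval_expr_closed[OF \<tau> expr_over_\<beta>]
    by (simp add: output_nums_eq)
qed

lemma eval_lifted_nums_cong:
  assumes "\<forall>i < 2 ^ length (sd_codes ns). \<sigma> i = \<sigma>' i"
  shows "eval_nums \<sigma> (lifted_nums ns) = eval_nums \<sigma>' (lifted_nums ns)"
proof (rule eval_expr_cong)
  fix i
  assume "Var i \<in> set (map (letter_of_num G) (lifted_nums ns)) \<or>
    IVar i \<in> set (map (letter_of_num G) (lifted_nums ns))"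
  then obtain k where "k \<in> set (lifted_nums ns)"
    and "letter_of_num G k = Var i \<or> letter_of_num G k = IVar i"
    by auto
  moreover from this(2) have "k mod 3 \<noteq> 0" "i = k div 3"
    by (auto simp: letter_of_num_def split: if_splits)
  ultimately show "\<sigma> i = \<sigma>' i"
    using lifted_nums_var_bound assms by blast
qed

lemma mem_H_iff: "g \<in> H \<longleftrightarrow> g \<in> carrier G \<and> (\<forall>\<sigma>. assignment G \<sigma> \<longrightarrow> \<sigma> 0 = g \<longrightarrow> eval_expr G \<sigma> \<beta> = \<one>)"
  by (subst H_eq) simp

lemma EQN_ID_iff_lifted_in_H:
  assumes valid: "\<forall>m\<in>set ns. valid_num Q m"
  shows "map (letter_of_num Q) ns \<in> EQN_ID Q \<longleftrightarrow>
    (\<forall>\<sigma>. assignment G \<sigma> \<longrightarrow> eval_nums \<sigma> (lifted_nums ns) \<in> H)"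
proof -
  have subgroup: "subgroup H G" using normal_H by (rule normal_imp_subgroup)
  have closed: "eval_nums \<sigma> (lifted_nums ns) \<in> carrier G" if "assignment G \<sigma>" for \<sigma>
    using eval_nums_closed[OF that] valid valid_lifted_nums by blast
  show ?thesis
  proof (intro iffI allI impI)
    fix \<sigma> assume "map (letter_of_num Q) ns \<in> EQN_ID Q" and \<sigma>: "assignment G \<sigma>"
    then have "H #> eval_nums \<sigma> (lifted_nums ns) = \<one>\<^bsub>Q\<^esub>"
      using assignment_coset[OF \<sigma>] coset_eval_lifted_nums[OF valid \<sigma>] by (simp add: EQN_ID_def)
    then show "eval_nums \<sigma> (lifted_nums ns) \<in> H"
      using coset_join1[OF _ closed[OF \<sigma>] subgroup] by simp
  next
    assume in_H: "\<forall>\<sigma>. assignment G \<sigma> \<longrightarrow> eval_nums \<sigma> (lifted_nums ns) \<in> H"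
    have "eval_expr Q \<rho> (map (letter_of_num Q) ns) = \<one>\<^bsub>Q\<^esub>" if \<rho>: "assignment Q \<rho>" for \<rho>
    proof -
      have \<sigma>: "assignment G (\<lambda>i. rep (\<rho> i))" using assignment_rep[OF \<rho>] .
      have "(\<lambda>i. H #> rep (\<rho> i)) = \<rho>"
        using \<rho> rep_coset by (auto simp: assignment_def)
      then show ?thesis
        using coset_eval_lifted_nums[OF valid \<sigma>] coset_join2[OF closed[OF \<sigma>] subgroup] in_H \<sigma>
        by simp
    qed
    then show "map (letter_of_num Q) ns \<in> EQN_ID Q"
      using expr_over_map_letter_of_num[OF finite_Q valid] by (simp add: EQN_ID_def)
  qed
qed

lemma lifted_in_H_iff_output_one:
  assumes valid: "\<forall>m\<in>set ns. valid_num Q m"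
  defines "n \<equiv> length (sd_codes ns)"
  shows "(\<forall>\<sigma>. assignment G \<sigma> \<longrightarrow> eval_nums \<sigma> (lifted_nums ns) \<in> H) \<longleftrightarrow>
    (\<forall>\<sigma>. assignment G \<sigma> \<longrightarrow> eval_nums \<sigma> (output_nums n ns) = \<one>)"
proof (intro iffI allI impI)
  fix \<sigma> assume in_H: "\<forall>\<sigma>. assignment G \<sigma> \<longrightarrow> eval_nums \<sigma> (lifted_nums ns) \<in> H"
    and \<sigma>: "assignment G \<sigma>"
  define t where "t = eval_nums \<sigma> (lifted_nums ns)"
  have "t \<in> H" using in_H \<sigma> by (simp add: t_def)
  moreover have "assignment G (\<lambda>j. if j = 0 then t else \<sigma> (2 ^ n + j))"
    using \<sigma> \<open>t \<in> H\<close> unfolding mem_H_iff by (simp add: assignment_def)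
  ultimately have "eval_expr G (\<lambda>j. if j = 0 then t else \<sigma> (2 ^ n + j)) \<beta> = \<one>"
    unfolding mem_H_iff by simp
  then show "eval_nums \<sigma> (output_nums n ns) = \<one>"
    using eval_output_nums[OF valid \<sigma>, of n] unfolding t_def by simp
next
  fix \<sigma>\<^sub>0 assume one: "\<forall>\<sigma>. assignment G \<sigma> \<longrightarrow> eval_nums \<sigma> (output_nums n ns) = \<one>"
    and \<sigma>\<^sub>0: "assignment G \<sigma>\<^sub>0"
  define t where "t = eval_nums \<sigma>\<^sub>0 (lifted_nums ns)"
  have "eval_expr G \<sigma>' \<beta> = \<one>" if \<sigma>': "assignment G \<sigma>'" "\<sigma>' 0 = t" for \<sigma>'
  proof -
    define \<sigma> where "\<sigma> = (\<lambda>i. if i < 2 ^ n then \<sigma>\<^sub>0 i else \<sigma>' (i - 2 ^ n))"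
    have \<sigma>: "assignment G \<sigma>" using \<sigma>\<^sub>0 \<sigma>'(1) by (simp add: assignment_def \<sigma>_def)
    have "eval_nums \<sigma> (lifted_nums ns) = t"
      unfolding t_def by (rule eval_lifted_nums_cong) (simp add: \<sigma>_def n_def)
    then have "(\<lambda>j. if j = 0 then eval_nums \<sigma> (lifted_nums ns) else \<sigma> (2 ^ n + j)) = \<sigma>'"
      using \<sigma>'(2) by (auto simp: \<sigma>_def)
    then show ?thesis
      using eval_output_nums[OF valid \<sigma>, of n] one \<sigma> by simp
  qed
  moreover have "t \<in> carrier G"
    using eval_nums_closed[OF \<sigma>\<^sub>0] valid valid_lifted_nums by (simp add: t_def)
  ultimately show "eval_nums \<sigma>\<^sub>0 (lifted_nums ns) \<in> H"
    unfolding mem_H_iff t_def by blast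
qed

theorem EQN_ID_iff_output_nums:
  assumes valid: "\<forall>m\<in>set ns. valid_num Q m"
  shows "map (letter_of_num Q) ns \<in> EQN_ID Q \<longleftrightarrow>
    map (letter_of_num G) (output_nums (length (sd_codes ns)) ns) \<in> EQN_ID G"
  using EQN_ID_iff_lifted_in_H[OF valid] lifted_in_H_iff_output_one[OF valid]
    expr_over_map_letter_of_num[OF finite_G] valid_output_nums valid
  by (simp add: EQN_ID_def)

end

lemma sd_codes_concat: "sd_codes (concat nss) = concat (map sd_codes nss)"
  by (induction nss) auto

context quotient_reduction
begin

definition segment_circs :: "nat \<Rightarrow> nat list option \<Rightarrow> circ list" where
  "segment_circs n s =
     (case s of None \<Rightarrow> translation.translation_circs n | Some ks \<Rightarrow> map const_circ (sd_codes ks))"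

text \<open>Words that encode no expression are mapped to words of ones, which encode none either.\<close>

definition reduction_circs :: "nat \<Rightarrow> circ list" where
  "reduction_circs n =
     map (\<lambda>c. Disj [not_sd_codes_circ n, c]) (concat (map (segment_circs n) (output_segments n)))"

lemma reduction_circs_sd_codes:
  "map (ceval (sd_codes ns)) (reduction_circs (length (sd_codes ns))) =
    sd_codes (output_nums (length (sd_codes ns)) ns)"
proof -
  let ?n = "length (sd_codes ns)"
  have "\<not> ceval (sd_codes ns) (not_sd_codes_circ ?n)"
    using ceval_not_sd_codes_circ by blast
  then have "map (ceval (sd_codes ns)) (reduction_circs ?n) =
      concat (map (\<lambda>s. map (ceval (sd_codes ns)) (segment_circs ?n s)) (output_segments ?n))"
    by (simp add: reduction_circs_def map_concat comp_def)
  also have "\<dots> = concat (map (\<lambda>s. sd_codes (segment_nums ns s)) (output_segments ?n))"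
    using translation.translation_circs_correct[of ns]
    by (intro arg_cong[where f = concat] map_cong refl, case_tac x)
      (simp_all add: segment_circs_def segment_nums_def lifted_nums_def sd_codes_concat
        comp_def map_idI)
  also have "\<dots> = sd_codes (output_nums ?n ns)"
    by (simp only: output_nums_def sd_codes_concat map_map comp_def)
  finally show ?thesis .
qed

lemma reduction_circs_not_sd_codes:
  "\<not> (\<exists>ns. x = sd_codes ns) \<Longrightarrow>
    map (ceval x) (reduction_circs (length x)) =
      replicate (length (reduction_circs (length x))) True"
  using ceval_not_sd_codes_circ[of x]
  by (simp add: reduction_circs_def map_replicate_const[symmetric] del: map_replicate_const)

lemma reduction_circs_nonempty:
  assumes "0 < n"
  shows "reduction_circs n \<noteq> []"
proof -
  have "translation.translation_circs n \<noteq> []"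
    using translation.length_translation_circs[of n] assms by (auto simp: K_def)
  then show ?thesis
    using card_G_pos by (auto simp: reduction_circs_def output_segments_def segment_circs_def)
qed

lemma cdepth_reduction_circs:
  assumes "c \<in> set (reduction_circs n)"
  shows "cdepth c \<le> 7"
proof -
  obtain s c' where c: "c = Disj [not_sd_codes_circ n, c']" "c' \<in> set (segment_circs n s)"
    using assms by (auto simp: reduction_circs_def)
  then have "cdepth c' \<le> 6"
    using translation.cdepth_translation_circs by (cases s) (auto simp: segment_circs_def)
  then show ?thesis
    using c(1) order.trans[OF cdepth_not_sd_codes_circ, of 6] by simp
qed

lemma csize_reduction_circs:
  assumes "c \<in> set (reduction_circs n)"
  shows "csize c \<le> (2 ^ L * (2 * L + 1) + 49) * (n + 1) ^ 3"
proof -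
  define T where "T = 2 ^ L * (2 * L + 1) + 36"
  obtain s c' where c: "c = Disj [not_sd_codes_circ n, c']" "c' \<in> set (segment_circs n s)"
    using assms by (auto simp: reduction_circs_def)
  have "csize c' \<le> T * (n + 1) ^ 3"
    using c(2) translation.csize_translation_circs[of c' n]
    by (cases s) (auto simp: segment_circs_def T_def intro: le_trans[of _ 1])
  moreover have "12 * n + 13 \<le> 13 * (n + 1) ^ 3"
    using mult_le_mono2[of "n + 1" "(n + 1) ^ 3" 13] by (simp add: power3_eq_cube)
  ultimately show ?thesis
    using c(1) csize_not_sd_codes_circ[of n] by (simp add: T_def algebra_simps)
qed

lemma length_segment_circs:
  assumes "s \<in> set (output_segments n)"
  shows "length (segment_circs n s) \<le> (K + (\<Sum>a\<leftarrow>\<beta>. 2 * letter_num G a + 8)) * (n + 1)"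
proof (cases s)
  case None
  have "K * n \<le> (K + (\<Sum>a\<leftarrow>\<beta>. 2 * letter_num G a + 8)) * (n + 1)"
    by (intro mult_le_mono) auto
  then show ?thesis
    using None translation.length_translation_circs[of n] by (simp add: segment_circs_def)
next
  case (Some ks)
  then obtain a where a: "a \<in> set \<beta>" "ks = [letter_num G (shifted_letter (2 ^ n) a)]"
    using assms by (auto simp: output_segments_def letter_segments_def split: if_splits)
  have "2 * letter_num G a + 8 \<le> (\<Sum>a\<leftarrow>\<beta>. 2 * letter_num G a + 8)"
    using a(1) by (simp add: member_le_sum_list)
  then have "(2 * letter_num G a + 8) * (n + 1) \<le> (K + (\<Sum>a\<leftarrow>\<beta>. 2 * letter_num G a + 8)) * (n + 1)"
    by (intro mult_le_mono1) simp
  then show ?thesis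
    using Some a(2) length_sd_code_shifted_letter[of G n a]
    by (simp add: segment_circs_def del: length_sd_code)
qed

lemma length_output_segments: "length (output_segments n) \<le> card (carrier G) * (length \<beta> + 1)"
proof -
  have "length (letter_segments n a) \<le> card (carrier G)" for a
    using card_G_pos by (simp add: letter_segments_def)
  then have "length (concat (map (letter_segments n) \<beta>)) \<le> length \<beta> * card (carrier G)"
    using sum_list_mono[of \<beta> "\<lambda>a. length (letter_segments n a)" "\<lambda>_. card (carrier G)"]
    by (simp add: length_concat sum_list_triv comp_def)
  then show ?thesis by (simp add: output_segments_def algebra_simps)
qed

lemma length_reduction_circs:
  "length (reduction_circs n) \<le>
    card (carrier G) * (length \<beta> + 1) * (K + (\<Sum>a\<leftarrow>\<beta>. 2 * letter_num G a + 8)) * (n + 1)"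
proof -
  let ?W = "(K + (\<Sum>a\<leftarrow>\<beta>. 2 * letter_num G a + 8)) * (n + 1)"
  have "length (reduction_circs n) = (\<Sum>s\<leftarrow>output_segments n. length (segment_circs n s))"
    by (simp add: reduction_circs_def length_concat comp_def)
  also have "\<dots> \<le> length (output_segments n) * ?W"
    using sum_list_mono[of "output_segments n" "\<lambda>s. length (segment_circs n s)" "\<lambda>_. ?W"]
      length_segment_circs by (simp add: sum_list_triv)
  also have "\<dots> \<le> card (carrier G) * (length \<beta> + 1) * ?W"
    using length_output_segments by (intro mult_le_mono1)
  finally show ?thesis by (simp only: mult.assoc)
qed

lemma AC0_computable_reduction: "AC0_computable (\<lambda>x. map (ceval x) (reduction_circs (length x)))"
  using cdepth_reduction_circs length_reduction_circs csize_reduction_circs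
  by (intro AC0_computable_circuit_family) blast+

lemma sd_codes_in_EQN_ID_lang_Q_iff:
  "sd_codes ns \<in> EQN_ID_lang Q \<longleftrightarrow> sd_codes (output_nums (length (sd_codes ns)) ns) \<in> EQN_ID_lang G"
proof (cases "\<forall>m\<in>set ns. valid_num Q m")
  case True
  have "sd_codes ns \<in> EQN_ID_lang Q \<longleftrightarrow> map (letter_of_num Q) ns \<in> EQN_ID Q"
    using sd_codes_in_EQN_ID_lang_iff[OF finite_Q] True by simp
  also have "\<dots> \<longleftrightarrow> map (letter_of_num G) (output_nums (length (sd_codes ns)) ns) \<in> EQN_ID G"
    using True by (rule EQN_ID_iff_output_nums)
  also have "\<dots> \<longleftrightarrow> sd_codes (output_nums (length (sd_codes ns)) ns) \<in> EQN_ID_lang G"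
    using sd_codes_in_EQN_ID_lang_iff[OF finite_G] valid_output_nums True by simp
  finally show ?thesis .
next
  case False
  then show ?thesis
    using sd_codes_in_EQN_ID_lang_iff[OF finite_Q] sd_codes_in_EQN_ID_lang_iff[OF finite_G]
      valid_output_nums by blast
qed

lemma reduction_circs_not_in_EQN_ID_lang:
  assumes "\<not> (\<exists>ns. x = sd_codes ns)"
  shows "map (ceval x) (reduction_circs (length x)) \<notin> EQN_ID_lang G"
proof
  assume "map (ceval x) (reduction_circs (length x)) \<in> EQN_ID_lang G"
  then obtain ms where ms: "replicate (length (reduction_circs (length x))) True = sd_codes ms"
    using reduction_circs_not_sd_codes[OF assms] EQN_ID_lang_imp_sd_codes by metis
  have "x \<noteq> []" using assms by (metis concat.simps(1) list.simps(8))
  then have "ms \<noteq> []" using ms reduction_circs_nonempty by fastforce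
  then show False using False_in_set_sd_codes ms by (metis in_set_replicate)
qed

theorem AC0_reduction: "AC0_many_one_reducible (EQN_ID_lang Q) (EQN_ID_lang G)"
  unfolding AC0_many_one_reducible_def
proof (intro exI conjI allI)
  show "AC0_computable (\<lambda>x. map (ceval x) (reduction_circs (length x)))"
    by (rule AC0_computable_reduction)
  fix x :: "bool list"
  show "x \<in> EQN_ID_lang Q \<longleftrightarrow> map (ceval x) (reduction_circs (length x)) \<in> EQN_ID_lang G"
  proof (cases "\<exists>ns. x = sd_codes ns")
    case True
    then show ?thesis using sd_codes_in_EQN_ID_lang_Q_iff reduction_circs_sd_codes by auto
  next
    case False
    then show ?thesis using reduction_circs_not_in_EQN_ID_lang EQN_ID_lang_imp_sd_codes by blast
  qed
qed

end

theorem lemma2p7: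
  fixes G :: "('a, 'b) monoid_scheme" and H :: "'a set"
  assumes "group G"
    and "finite (carrier G)"
    and "H \<lhd> G"
    and "atomically_universally_definable G H"
  shows "AC0_many_one_reducible (EQN_ID_lang (G Mod H)) (EQN_ID_lang G)"
proof -
  obtain \<beta> where "expr_over G \<beta>"
    and "H = {g \<in> carrier G. \<forall>\<sigma>. assignment G \<sigma> \<longrightarrow> \<sigma> 0 = g \<longrightarrow> eval_expr G \<sigma> \<beta> = \<one>\<^bsub>G\<^esub>}"
    using assms(4) unfolding atomically_universally_definable_def by blast
  then interpret quotient_reduction G H \<beta>
    using assms(1-3) by (simp add: quotient_reduction_def quotient_reduction_axioms_def)
  show ?thesis by (rule AC0_reduction)
qed

end
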